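(* Consider the $K$-class system with class-wise distributions described in the context, with constants $\bar M_R,\bar L_R,\bar L_P,\bar L_Q>0$ and $\gamma\in[0,1)$. Let $\mathbf{x}_0^{\mathbf{N}}$ be given initial states and $\bar{\boldsymbol\mu}_0\in\mathcal P^K(\mathcal X)$ the resulting collection of class-wise empirical state distributions. Define $\bar C_R=\bar M_R+\bar L_R$, $\bar C_P=2+K\bar L_P$, $\bar S_R=\bar M_R(1+\bar L_Q)+\bar L_R(2+K\bar L_Q)$, $\bar S_P=(1+K\bar L_Q)+K\bar L_P(2+K\bar L_Q)$. If $\gamma\bar S_P<1$, then for every $\bar{\boldsymbol\pi}\in\bar\Pi$, $$\Big|\bar v^{\mathbf N}(\mathbf x_0^{\mathbf N},\bar{\boldsymbol\pi})-\bar v^{\mathrm{MF}}(\bar{\boldsymbol\mu}_0,\bar{\boldsymbol\pi})\Big|\le\frac{\bar C_R}{1-\gamma}\sqrt{|\mathcal X||\mathcal U|}\Big(\sum_{k\in[K]}\frac{1}{\sqrt{N_k}}\Big)+\bar C_P\Big(\frac{\bar S_R}{\bar S_P-1}\Big)\sqrt{|\mathcal X||\mathcal U|}\Big(\sum_{k\in[K]}\frac1{\sqrt{N_k}}\Big)\Big[\frac{1}{1-\gamma\bar S_P}-\frac{1}{1-\gamma}\Big].$$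
   Context: Fix integers $K\ge1$, $N_1,\dots,N_K\ge1$, $[K]=\{1,\dots,K\}$, $N_{\mathrm{pop}}=\sum_kN_k$, $\theta_k=N_k/N_{\mathrm{pop}}$, finite sets $\mathcal X,\mathcal U$. $\mathcal P(A)$ denotes probability distributions on $A$; $\mathcal P^K(A)=\mathcal P(A)\times\cdots\times\mathcal P(A)$ ($K$ factors), whose elements $\bar{\boldsymbol\mu}$ are written $\bar{\boldsymbol\mu}(\cdot,k)\in\mathcal P(A)$, with $|\bar{\boldsymbol\mu}|_1=\sum_k\sum_a|\bar{\boldsymbol\mu}(a,k)|$. Agent $j\in[N_k]$ of class $k$ has state $x_{j,k}^t\in\mathcal X$, action $u_{j,k}^t\in\mathcal U$. Class-wise empirical distributions: $\bar{\boldsymbol\mu}_t^{\mathbf N}(x,k)=\frac1{N_k}\sum_{j=1}^{N_k}\mathbf 1(x_{j,k}^t=x)$, $\bar{\boldsymbol\nu}_t^{\mathbf N}(u,k)=\frac1{N_k}\sum_{j=1}^{N_k}\mathbf 1(u_{j,k}^t=u)$. For each $k$: $\bar r_k:\mathcal X\times\mathcal U\times\mathcal P^K(\mathcal X)\times\mathcal P^K(\mathcal U)\to\mathbb R$ and $\bar P_k:\mathcal X\times\mathcal U\times\mathcal P^K(\mathcal X)\times\mathcal P^K(\mathcal U)\to\mathcal P(\mathcal X)$ with, for all arguments, $|\bar r_k(x,u,\bar{\boldsymbol\mu}_1,\bar{\boldsymbol\nu}_1)|\le\bar M_R$, $|\bar r_k(x,u,\bar{\boldsymbol\mu}_1,\bar{\boldsymbol\nu}_1)-\bar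 r_k(x,u,\bar{\boldsymbol\mu}_2,\bar{\boldsymbol\nu}_2)|\le\bar L_R(|\bar{\boldsymbol\mu}_1-\bar{\boldsymbol\mu}_2|_1+|\bar{\boldsymbol\nu}_1-\bar{\boldsymbol\nu}_2|_1)$, $|\bar P_k(x,u,\bar{\boldsymbol\mu}_1,\bar{\boldsymbol\nu}_1)-\bar P_k(x,u,\bar{\boldsymbol\mu}_2,\bar{\boldsymbol\nu}_2)|_1\le\bar L_P(|\bar{\boldsymbol\mu}_1-\bar{\boldsymbol\mu}_2|_1+|\bar{\boldsymbol\nu}_1-\bar{\boldsymbol\nu}_2|_1)$. A policy is $\bar{\boldsymbol\pi}=\{\bar{\boldsymbol\pi}_t\}_{t\ge0}$, $\bar{\boldsymbol\pi}_t=(\bar\pi_k^t)_k$, $\bar\pi_k^t:\mathcal X\times\mathcal P^K(\mathcal X)\to\mathcal P(\mathcal U)$; $\bar\Pi$ is the set of policies with $|\bar\pi_k^t(x,\bar{\boldsymbol\mu}_1)-\bar\pi_k^t(x,\bar{\boldsymbol\mu}_2)|_1\le\bar L_Q|\bar{\boldsymbol\mu}_1-\bar{\boldsymbol\mu}_2|_1$ for all $t,k,x$. Dynamics: conditioned on all states at time $t$, actions are independent across agents with $u_{j,k}^t\sim\bar\pi_k^t(x_{j,k}^t,\bar{\boldsymbol\mu}_t^{\mathbf N})$; conditioned on all states and actions at time $t$, next states are independent with $x_{j,k}^{t+1}\sim\bar P_k(x_{j,k}^t,u_{j,k}^t,\bar{\boldsymbol\mu}_t^{\mathbf N},\bar{\boldsymbol\nu}_t^{\mathbf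 N})$. Empirical value $\bar v^{\mathbf N}(\mathbf x_0^{\mathbf N},\bar{\boldsymbol\pi})=\frac1{N_{\mathrm{pop}}}\sum_k\sum_{j=1}^{N_k}\mathbb E[\sum_{t\ge0}\gamma^t\bar r_k(x_{j,k}^t,u_{j,k}^t,\bar{\boldsymbol\mu}_t^{\mathbf N},\bar{\boldsymbol\nu}_t^{\mathbf N})]$. Mean-field operators for $\bar{\boldsymbol\mu}\in\mathcal P^K(\mathcal X)$ and decision rules $\bar{\boldsymbol\pi}=(\bar\pi_k)_k$: $\bar\nu^{\mathrm{MF}}(\bar{\boldsymbol\mu},\bar{\boldsymbol\pi})(u,k)=\sum_x\bar\pi_k(x,\bar{\boldsymbol\mu})(u)\bar{\boldsymbol\mu}(x,k)$; $\bar P^{\mathrm{MF}}(\bar{\boldsymbol\mu},\bar{\boldsymbol\pi})(x',k)=\sum_{x,u}\bar{\boldsymbol\mu}(x,k)\bar\pi_k(x,\bar{\boldsymbol\mu})(u)\bar P_k(x,u,\bar{\boldsymbol\mu},\bar\nu^{\mathrm{MF}}(\bar{\boldsymbol\mu},\bar{\boldsymbol\pi}))(x')$; $\bar r_k^{\mathrm{MF}}(\bar{\boldsymbol\mu},\bar{\boldsymbol\pi})=\sum_{x,u}\bar{\boldsymbol\mu}(x,k)\bar\pi_k(x,\bar{\boldsymbol\mu})(u)\bar r_k(x,u,\bar{\boldsymbol\mu},\bar\nu^{\mathrm{MF}}(\bar{\boldsymbol\mu},\bar{\boldsymbol\pi}))$. Mean-field value: with $\bar{\boldsymbol\mu}_{t+1}=\bar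 P^{\mathrm{MF}}(\bar{\boldsymbol\mu}_t,\bar{\boldsymbol\pi}_t)$, $\bar v^{\mathrm{MF}}(\bar{\boldsymbol\mu}_0,\bar{\boldsymbol\pi})=\sum_k\theta_k\sum_{t\ge0}\gamma^t\bar r_k^{\mathrm{MF}}(\bar{\boldsymbol\mu}_t,\bar{\boldsymbol\pi}_t)$. *)

theory Defs
  imports "HOL-Probability.Probability"
begin

text \<open>Conventions: classes are indexed by k < K (i.e. [K] = {0..<K}); agent j of class k
  by j < N k.  An element of P^K(A) is a function nat => A pmf whose components k < K matter.
  A joint configuration of the N-agent system is a function (k,j) => state.\<close>

definition l1_pmf :: "'a::finite pmf \<Rightarrow> 'a pmf \<Rightarrow> real" where
  "l1_pmf p q = (\<Sum>a\<in>UNIV. \<bar>pmf p a - pmf q a\<bar>)"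

definition distK :: "nat \<Rightarrow> (nat \<Rightarrow> 'a::finite pmf) \<Rightarrow> (nat \<Rightarrow> 'a pmf) \<Rightarrow> real" where
  "distK K m1 m2 = (\<Sum>k<K. l1_pmf (m1 k) (m2 k))"

definition agents :: "nat \<Rightarrow> (nat \<Rightarrow> nat) \<Rightarrow> (nat \<times> nat) set" where
  "agents K N = (SIGMA k:{..<K}. {..<N k})"

definition Npop :: "nat \<Rightarrow> (nat \<Rightarrow> nat) \<Rightarrow> nat" where
  "Npop K N = (\<Sum>k<K. N k)"

definition theta :: "nat \<Rightarrow> (nat \<Rightarrow> nat) \<Rightarrow> nat \<Rightarrow> real" where
  "theta K N k = real (N k) / real (Npop K N)"

definition emp :: "(nat \<Rightarrow> nat) \<Rightarrow> (nat \<times> nat \<Rightarrow> 'a) \<Rightarrow> nat \<Rightarrow> 'a pmf" where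
  "emp N c k = map_pmf (\<lambda>j. c (k, j)) (pmf_of_set {..<N k})"

definition act_pmf ::
  "nat \<Rightarrow> (nat \<Rightarrow> nat) \<Rightarrow> (nat \<Rightarrow> nat \<Rightarrow> 'x \<Rightarrow> (nat \<Rightarrow> 'x pmf) \<Rightarrow> 'u pmf)
     \<Rightarrow> nat \<Rightarrow> (nat \<times> nat \<Rightarrow> 'x) \<Rightarrow> (nat \<times> nat \<Rightarrow> 'u) pmf" where
  "act_pmf K N pol t s =
     Pi_pmf (agents K N) undefined (\<lambda>(k, j). pol t k (s (k, j)) (emp N s))"

definition next_pmf ::
  "nat \<Rightarrow> (nat \<Rightarrow> nat) \<Rightarrow> (nat \<Rightarrow> 'x \<Rightarrow> 'u \<Rightarrow> (nat \<Rightarrow> 'x pmf) \<Rightarrow> (nat \<Rightarrow> 'u pmf) \<Rightarrow> 'x pmf)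
     \<Rightarrow> (nat \<times> nat \<Rightarrow> 'x) \<Rightarrow> (nat \<times> nat \<Rightarrow> 'u) \<Rightarrow> (nat \<times> nat \<Rightarrow> 'x) pmf" where
  "next_pmf K N P s a =
     Pi_pmf (agents K N) undefined (\<lambda>(k, j). P k (s (k, j)) (a (k, j)) (emp N s) (emp N a))"

primrec state_dist ::
  "nat \<Rightarrow> (nat \<Rightarrow> nat) \<Rightarrow> (nat \<Rightarrow> 'x \<Rightarrow> 'u \<Rightarrow> (nat \<Rightarrow> 'x pmf) \<Rightarrow> (nat \<Rightarrow> 'u pmf) \<Rightarrow> 'x pmf)
     \<Rightarrow> (nat \<Rightarrow> nat \<Rightarrow> 'x \<Rightarrow> (nat \<Rightarrow> 'x pmf) \<Rightarrow> 'u pmf) \<Rightarrow> (nat \<times> nat \<Rightarrow> 'x)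
     \<Rightarrow> nat \<Rightarrow> (nat \<times> nat \<Rightarrow> 'x) pmf" where
  "state_dist K N P pol x0 0 = return_pmf x0"
| "state_dist K N P pol x0 (Suc t) =
     bind_pmf (state_dist K N P pol x0 t)
       (\<lambda>s. bind_pmf (act_pmf K N pol t s) (\<lambda>a. next_pmf K N P s a))"

definition joint_dist ::
  "nat \<Rightarrow> (nat \<Rightarrow> nat) \<Rightarrow> (nat \<Rightarrow> 'x \<Rightarrow> 'u \<Rightarrow> (nat \<Rightarrow> 'x pmf) \<Rightarrow> (nat \<Rightarrow> 'u pmf) \<Rightarrow> 'x pmf)
     \<Rightarrow> (nat \<Rightarrow> nat \<Rightarrow> 'x \<Rightarrow> (nat \<Rightarrow> 'x pmf) \<Rightarrow> 'u pmf) \<Rightarrow> (nat \<times> nat \<Rightarrow> 'x)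
     \<Rightarrow> nat \<Rightarrow> ((nat \<times> nat \<Rightarrow> 'x) \<times> (nat \<times> nat \<Rightarrow> 'u)) pmf" where
  "joint_dist K N P pol x0 t =
     bind_pmf (state_dist K N P pol x0 t) (\<lambda>s. map_pmf (\<lambda>a. (s, a)) (act_pmf K N pol t s))"

definition v_N ::
  "nat \<Rightarrow> (nat \<Rightarrow> nat) \<Rightarrow> real
     \<Rightarrow> (nat \<Rightarrow> 'x \<Rightarrow> 'u \<Rightarrow> (nat \<Rightarrow> 'x pmf) \<Rightarrow> (nat \<Rightarrow> 'u pmf) \<Rightarrow> real)
     \<Rightarrow> (nat \<Rightarrow> 'x \<Rightarrow> 'u \<Rightarrow> (nat \<Rightarrow> 'x pmf) \<Rightarrow> (nat \<Rightarrow> 'u pmf) \<Rightarrow> 'x pmf)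
     \<Rightarrow> (nat \<times> nat \<Rightarrow> 'x) \<Rightarrow> (nat \<Rightarrow> nat \<Rightarrow> 'x \<Rightarrow> (nat \<Rightarrow> 'x pmf) \<Rightarrow> 'u pmf) \<Rightarrow> real" where
  "v_N K N \<gamma> r P x0 pol =
     (1 / real (Npop K N)) *
     (\<Sum>(k, j)\<in>agents K N. \<Sum>t. \<gamma> ^ t *
        measure_pmf.expectation (joint_dist K N P pol x0 t)
          (\<lambda>(s, a). r k (s (k, j)) (a (k, j)) (emp N s) (emp N a)))"

definition nu_MF :: "(nat \<Rightarrow> 'x pmf) \<Rightarrow> (nat \<Rightarrow> 'x \<Rightarrow> (nat \<Rightarrow> 'x pmf) \<Rightarrow> 'u pmf) \<Rightarrow> nat \<Rightarrow> 'u pmf" where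
  "nu_MF mu dr k = bind_pmf (mu k) (\<lambda>x. dr k x mu)"

definition P_MF ::
  "(nat \<Rightarrow> 'x \<Rightarrow> 'u \<Rightarrow> (nat \<Rightarrow> 'x pmf) \<Rightarrow> (nat \<Rightarrow> 'u pmf) \<Rightarrow> 'x pmf)
     \<Rightarrow> (nat \<Rightarrow> 'x pmf) \<Rightarrow> (nat \<Rightarrow> 'x \<Rightarrow> (nat \<Rightarrow> 'x pmf) \<Rightarrow> 'u pmf) \<Rightarrow> nat \<Rightarrow> 'x pmf" where
  "P_MF P mu dr k =
     bind_pmf (mu k) (\<lambda>x. bind_pmf (dr k x mu) (\<lambda>u. P k x u mu (nu_MF mu dr)))"

definition r_MF ::
  "(nat \<Rightarrow> 'x::finite \<Rightarrow> 'u::finite \<Rightarrow> (nat \<Rightarrow> 'x pmf) \<Rightarrow> (nat \<Rightarrow> 'u pmf) \<Rightarrow> real)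
     \<Rightarrow> (nat \<Rightarrow> 'x pmf) \<Rightarrow> (nat \<Rightarrow> 'x \<Rightarrow> (nat \<Rightarrow> 'x pmf) \<Rightarrow> 'u pmf) \<Rightarrow> nat \<Rightarrow> real" where
  "r_MF r mu dr k =
     (\<Sum>x\<in>UNIV. \<Sum>u\<in>UNIV. pmf (mu k) x * pmf (dr k x mu) u * r k x u mu (nu_MF mu dr))"

primrec mf_traj ::
  "(nat \<Rightarrow> 'x \<Rightarrow> 'u \<Rightarrow> (nat \<Rightarrow> 'x pmf) \<Rightarrow> (nat \<Rightarrow> 'u pmf) \<Rightarrow> 'x pmf)
     \<Rightarrow> (nat \<Rightarrow> nat \<Rightarrow> 'x \<Rightarrow> (nat \<Rightarrow> 'x pmf) \<Rightarrow> 'u pmf) \<Rightarrow> (nat \<Rightarrow> 'x pmf)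
     \<Rightarrow> nat \<Rightarrow> nat \<Rightarrow> 'x pmf" where
  "mf_traj P pol mu0 0 = mu0"
| "mf_traj P pol mu0 (Suc t) = P_MF P (mf_traj P pol mu0 t) (pol t)"

definition v_MF ::
  "nat \<Rightarrow> (nat \<Rightarrow> nat) \<Rightarrow> real
     \<Rightarrow> (nat \<Rightarrow> 'x::finite \<Rightarrow> 'u::finite \<Rightarrow> (nat \<Rightarrow> 'x pmf) \<Rightarrow> (nat \<Rightarrow> 'u pmf) \<Rightarrow> real)
     \<Rightarrow> (nat \<Rightarrow> 'x \<Rightarrow> 'u \<Rightarrow> (nat \<Rightarrow> 'x pmf) \<Rightarrow> (nat \<Rightarrow> 'u pmf) \<Rightarrow> 'x pmf)
     \<Rightarrow> (nat \<Rightarrow> 'x pmf) \<Rightarrow> (nat \<Rightarrow> nat \<Rightarrow> 'x \<Rightarrow> (nat \<Rightarrow> 'x pmf) \<Rightarrow> 'u pmf) \<Rightarrow> real" where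
  "v_MF K N \<gamma> r P mu0 pol =
     (\<Sum>k<K. theta K N k * (\<Sum>t. \<gamma> ^ t * r_MF r (mf_traj P pol mu0 t) (pol t) k))"

definition Lip_policies :: "nat \<Rightarrow> real \<Rightarrow> (nat \<Rightarrow> nat \<Rightarrow> 'x::finite \<Rightarrow> (nat \<Rightarrow> 'x pmf) \<Rightarrow> 'u::finite pmf) set" where
  "Lip_policies K LQ = {pol. \<forall>t k x mu1 mu2. k < K \<longrightarrow>
      l1_pmf (pol t k x mu1) (pol t k x mu2) \<le> LQ * distK K mu1 mu2}"

end

theory Submission
  imports Defs
begin

text \<open>Let \<open>d = sqrt (|X| |U|) * (\<Sum>k. 1 / sqrt (N k))\<close>. Given the current states, the actions of
  the agents are independent, and so are the next states given states and actions; a second-moment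
  bound therefore puts each class-wise empirical state-action distribution, and each empirical
  next-state distribution, within expected \<open>L\<^sub>1\<close> distance \<open>d\<close> (summed over classes) of its
  conditional mean. Since the mean-field transition is \<open>S\<^sub>P\<close>-Lipschitz and the class-weighted
  mean-field reward \<open>S\<^sub>R\<close>-Lipschitz in the state distribution, the expected error
  \<open>e\<^sub>t = E |\<mu>\<^sup>N\<^sub>t - \<mu>\<^sub>t|\<^sub>1\<close> satisfies \<open>e\<^sub>0 = 0\<close> and \<open>e\<^sub>t\<^sub>+\<^sub>1 \<le> C\<^sub>P d + S\<^sub>P e\<^sub>t\<close> (the sampling of the next
  states contributes \<open>d\<close>, that of the actions \<open>(1 + K L\<^sub>P) d\<close> through the transition kernel), so
  \<open>e\<^sub>t \<le> C\<^sub>P d (S\<^sub>P\<^sup>t - 1) / (S\<^sub>P - 1)\<close>. The expected rewards at time \<open>t\<close> differ by at most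
  \<open>C\<^sub>R d + S\<^sub>R e\<^sub>t\<close>, and summing the discounted differences gives the bound.\<close>

lemma sum_pmf_UNIV: "(\<Sum>x\<in>(UNIV::'a::finite set). pmf p x) = 1"
  by (rule sum_pmf_eq_1) auto

lemma integrable_measure_pmf_bounded:
  fixes f :: "'a \<Rightarrow> real"
  assumes "\<And>x. \<bar>f x\<bar> \<le> B"
  shows "integrable (measure_pmf M) f"
  by (rule measure_pmf.integrable_const_bound[where B=B]) (use assms in auto)

lemma expectation_finite_pmf:
  fixes f :: "'a::finite \<Rightarrow> real"
  shows "measure_pmf.expectation p f = (\<Sum>x\<in>UNIV. f x * pmf p x)"
  by (rule integral_measure_pmf_real) auto

lemma pmf_bind_finite:
  fixes p :: "'a::finite pmf"
  shows "pmf (bind_pmf p f) y = (\<Sum>x\<in>UNIV. pmf p x * pmf (f x) y)"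
  by (simp add: pmf_bind expectation_finite_pmf mult.commute)

lemma expectation_bind_pmf:
  fixes f :: "'b \<Rightarrow> real"
  assumes "\<And>y. \<bar>f y\<bar> \<le> B"
  shows "measure_pmf.expectation (bind_pmf M N) f =
    measure_pmf.expectation M (\<lambda>x. measure_pmf.expectation (N x) f)"
  unfolding measure_pmf_bind
  by (rule integral_bind[where K="count_space UNIV" and B=B and B'=1])
     (use assms in \<open>auto simp: measure_pmf.emeasure_space_1 space_subprob_algebra
        subprob_space_measure_pmf\<close>)

lemma expectation_bind_pmf_finite:
  fixes f :: "'b::finite \<Rightarrow> real"
  shows "measure_pmf.expectation (bind_pmf M N) f =
    measure_pmf.expectation M (\<lambda>x. measure_pmf.expectation (N x) f)"
  by (rule expectation_bind_pmf[where B="\<Sum>y\<in>UNIV. \<bar>f y\<bar>"]) (rule member_le_sum, auto)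

lemma expectation_le_const:
  fixes f :: "'a \<Rightarrow> real"
  assumes "\<And>x. f x \<le> c" and "\<And>x. \<bar>f x\<bar> \<le> B"
  shows "measure_pmf.expectation p f \<le> c"
proof -
  have "measure_pmf.expectation p f \<le> measure_pmf.expectation p (\<lambda>x. c)"
    by (rule integral_mono[OF integrable_measure_pmf_bounded[OF assms(2)]]) (auto simp: assms(1))
  then show ?thesis by simp
qed

lemma abs_expectation_le:
  fixes f :: "'a \<Rightarrow> real"
  assumes "\<And>x. \<bar>f x\<bar> \<le> B"
  shows "\<bar>measure_pmf.expectation p f\<bar> \<le> B"
  by (rule order.trans[OF integral_abs_bound expectation_le_const[where B=B]]) (use assms in auto)

lemma expectation_le_affine:
  fixes f g :: "'a \<Rightarrow> real"
  assumes "\<And>x. f x \<le> c + a * g x" and "\<And>x. \<bar>f x\<bar> \<le> Bf" and "\<And>x. \<bar>g x\<bar> \<le> Bg"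
  shows "measure_pmf.expectation p f \<le> c + a * measure_pmf.expectation p g"
proof -
  have g: "integrable (measure_pmf p) g"
    by (rule integrable_measure_pmf_bounded[OF assms(3)])
  have "measure_pmf.expectation p f \<le> measure_pmf.expectation p (\<lambda>x. c + a * g x)"
    by (rule integral_mono[OF integrable_measure_pmf_bounded[OF assms(2)]]) (use g assms(1) in auto)
  also have "\<dots> = c + a * measure_pmf.expectation p g"
    using g by simp
  finally show ?thesis .
qed

lemma expectation_abs_le_sqrt_second_moment:
  fixes Y :: "'a \<Rightarrow> real"
  assumes "\<And>x. \<bar>Y x\<bar> \<le> B"
  shows "measure_pmf.expectation M (\<lambda>x. \<bar>Y x\<bar>) \<le> sqrt (measure_pmf.expectation M (\<lambda>x. (Y x)\<^sup>2))"
proof -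
  define m where "m = measure_pmf.expectation M (\<lambda>x. \<bar>Y x\<bar>)"
  have "B \<ge> 0" using assms[of undefined] by linarith
  have abs_Y: "integrable M (\<lambda>x. \<bar>Y x\<bar>)"
    by (rule integrable_measure_pmf_bounded[where B=B]) (use assms in auto)
  have sq_Y: "integrable M (\<lambda>x. (Y x)\<^sup>2)"
  proof (rule integrable_measure_pmf_bounded[where B="B * B"])
    fix x
    have "\<bar>Y x\<bar> * \<bar>Y x\<bar> \<le> B * B" by (rule mult_mono) (use assms \<open>B \<ge> 0\<close> in auto)
    then show "\<bar>(Y x)\<^sup>2\<bar> \<le> B * B" by (simp add: power2_eq_square abs_mult)
  qed
  have "0 \<le> measure_pmf.expectation M (\<lambda>x. (\<bar>Y x\<bar> - m)\<^sup>2)" by simp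
  also have "(\<lambda>x. (\<bar>Y x\<bar> - m)\<^sup>2) = (\<lambda>x. ((Y x)\<^sup>2 - 2 * m * \<bar>Y x\<bar>) + m\<^sup>2)"
    by (auto simp: power2_eq_square algebra_simps)
  also have "measure_pmf.expectation M \<dots> =
      measure_pmf.expectation M (\<lambda>x. (Y x)\<^sup>2) - 2 * m * m + m\<^sup>2"
    using abs_Y sq_Y by (simp add: m_def)
  finally have "m\<^sup>2 \<le> measure_pmf.expectation M (\<lambda>x. (Y x)\<^sup>2)"
    by (simp add: power2_eq_square)
  moreover have "m \<ge> 0" unfolding m_def by simp
  ultimately show ?thesis unfolding m_def[symmetric] by (simp add: real_le_rsqrt)
qed

lemma sum_sqrt_le_sqrt_card_mult_sum:
  fixes v :: "'a \<Rightarrow> real"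
  assumes "finite I" and "\<And>i. i \<in> I \<Longrightarrow> v i \<ge> 0"
  shows "(\<Sum>i\<in>I. sqrt (v i)) \<le> sqrt (card I * (\<Sum>i\<in>I. v i))"
proof -
  have "(\<Sum>i\<in>I. 1 * sqrt (v i))\<^sup>2 \<le> (\<Sum>i\<in>I. 1\<^sup>2) * (\<Sum>i\<in>I. (sqrt (v i))\<^sup>2)"
    by (rule Cauchy_Schwarz_ineq_sum)
  also have "\<dots> = card I * (\<Sum>i\<in>I. v i)" using assms by simp
  finally show ?thesis by (simp add: real_le_rsqrt)
qed

lemma abs_sums_le:
  fixes f g :: "nat \<Rightarrow> real"
  assumes "f sums F" and "g sums G" and "\<And>t. \<bar>f t\<bar> \<le> g t"
  shows "\<bar>F\<bar> \<le> G"
proof -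
  have "F \<le> G" by (rule sums_le[OF _ assms(1,2)]) (use assms(3) abs_le_D1 in blast)
  moreover have "- G \<le> F"
  proof (rule sums_le[OF _ sums_minus[OF assms(2)] assms(1)])
    show "- g t \<le> f t" for t using assms(3)[of t] by linarith
  qed
  ultimately show ?thesis by linarith
qed

lemma discounted_geometric_gap_sums:
  fixes \<gamma> S A B :: real
  assumes "0 \<le> \<gamma>" "\<gamma> < 1" "1 < S" "\<gamma> * S < 1"
  shows "(\<lambda>t. \<gamma> ^ t * (A + B * (S ^ t - 1) / (S - 1))) sums
    (A / (1 - \<gamma>) + B / (S - 1) * (1 / (1 - \<gamma> * S) - 1 / (1 - \<gamma>)))"
proof -
  have "(\<lambda>t. A * \<gamma> ^ t + B / (S - 1) * ((\<gamma> * S) ^ t - \<gamma> ^ t)) sums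
      (A * (1 / (1 - \<gamma>)) + B / (S - 1) * (1 / (1 - \<gamma> * S) - 1 / (1 - \<gamma>)))"
    using assms
    by (intro sums_add sums_mult sums_diff geometric_sums) (auto simp: mult_nonneg_nonneg)
  moreover have "\<gamma> ^ t * (A + B * (S ^ t - 1) / (S - 1)) =
      A * \<gamma> ^ t + B / (S - 1) * ((\<gamma> * S) ^ t - \<gamma> ^ t)" for t
    using assms(3) by (simp add: field_simps power_mult_distrib)
  ultimately show ?thesis by simp
qed

lemma l1_pmf_nonneg: "0 \<le> l1_pmf p q"
  by (simp add: l1_pmf_def sum_nonneg)

lemma l1_pmf_triangle: "l1_pmf p r \<le> l1_pmf p q + l1_pmf q r"
  unfolding l1_pmf_def sum.distrib[symmetric] by (intro sum_mono) linarith

lemma l1_pmf_le_2: "l1_pmf p q \<le> 2"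
proof -
  have "l1_pmf p q \<le> (\<Sum>a\<in>UNIV. pmf p a + pmf q a)"
    unfolding l1_pmf_def by (intro sum_mono) (simp add: abs_le_iff add_increasing add_increasing2)
  also have "\<dots> = 2" by (simp add: sum.distrib sum_pmf_UNIV)
  finally show ?thesis .
qed

lemma abs_l1_pmf_le_2: "\<bar>l1_pmf p q\<bar> \<le> 2"
  using l1_pmf_nonneg[of p q] l1_pmf_le_2[of p q] by simp

lemma l1_pmf_bind_pmf_le:
  fixes p q :: "'a::finite pmf" and f :: "'a \<Rightarrow> 'b::finite pmf"
  shows "l1_pmf (bind_pmf p f) (bind_pmf q f) \<le> l1_pmf p q"
proof -
  have "l1_pmf (bind_pmf p f) (bind_pmf q f) =
      (\<Sum>y\<in>UNIV. \<bar>\<Sum>x\<in>UNIV. (pmf p x - pmf q x) * pmf (f x) y\<bar>)"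
    unfolding l1_pmf_def pmf_bind_finite by (simp add: sum_subtractf algebra_simps)
  also have "\<dots> \<le> (\<Sum>y\<in>UNIV. \<Sum>x\<in>UNIV. \<bar>pmf p x - pmf q x\<bar> * pmf (f x) y)"
    by (intro sum_mono order.trans[OF sum_abs]) (simp add: abs_mult)
  also have "\<dots> = (\<Sum>x\<in>UNIV. \<bar>pmf p x - pmf q x\<bar> * (\<Sum>y\<in>UNIV. pmf (f x) y))"
    by (subst sum.swap) (simp add: sum_distrib_left)
  also have "\<dots> = l1_pmf p q" by (simp add: l1_pmf_def sum_pmf_UNIV)
  finally show ?thesis .
qed

lemma l1_pmf_map_pmf_le:
  fixes p q :: "'a::finite pmf" and h :: "'a \<Rightarrow> 'b::finite"
  shows "l1_pmf (map_pmf h p) (map_pmf h q) \<le> l1_pmf p q"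
  unfolding map_pmf_def by (rule l1_pmf_bind_pmf_le)

lemma l1_pmf_bind_pmf_kernels_le:
  fixes p :: "'a pmf" and f g :: "'a \<Rightarrow> 'b::finite pmf"
  shows "l1_pmf (bind_pmf p f) (bind_pmf p g) \<le> measure_pmf.expectation p (\<lambda>x. l1_pmf (f x) (g x))"
proof -
  have pmf_diff: "\<bar>pmf (f x) y - pmf (g x) y\<bar> \<le> 1" for x y
    using pmf_le_1[of "f x" y] pmf_le_1[of "g x" y] pmf_nonneg[of "f x" y] pmf_nonneg[of "g x" y]
    by linarith
  have "l1_pmf (bind_pmf p f) (bind_pmf p g) =
      (\<Sum>y\<in>UNIV. \<bar>measure_pmf.expectation p (\<lambda>x. pmf (f x) y - pmf (g x) y)\<bar>)"
    unfolding l1_pmf_def pmf_bind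
    by (simp add: Bochner_Integration.integral_diff integrable_measure_pmf_bounded[where B=1] pmf_le_1)
  also have "\<dots> \<le> (\<Sum>y\<in>UNIV. measure_pmf.expectation p (\<lambda>x. \<bar>pmf (f x) y - pmf (g x) y\<bar>))"
    by (intro sum_mono integral_abs_bound)
  also have "\<dots> = measure_pmf.expectation p (\<lambda>x. l1_pmf (f x) (g x))"
    unfolding l1_pmf_def
    by (rule Bochner_Integration.integral_sum[symmetric], rule integrable_measure_pmf_bounded[where B=1])
       (simp add: pmf_diff)
  finally show ?thesis .
qed

lemma abs_expectation_diff_le_l1_pmf:
  fixes p q :: "'a::finite pmf" and h :: "'a \<Rightarrow> real"
  assumes "\<And>x. \<bar>h x\<bar> \<le> B"
  shows "\<bar>measure_pmf.expectation p h - measure_pmf.expectation q h\<bar> \<le> B * l1_pmf p q"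
proof -
  have "\<bar>measure_pmf.expectation p h - measure_pmf.expectation q h\<bar> =
      \<bar>\<Sum>x\<in>UNIV. h x * (pmf p x - pmf q x)\<bar>"
    by (simp add: expectation_finite_pmf sum_subtractf algebra_simps)
  also have "\<dots> \<le> (\<Sum>x\<in>UNIV. \<bar>h x\<bar> * \<bar>pmf p x - pmf q x\<bar>)"
    by (rule order.trans[OF sum_abs]) (simp add: abs_mult)
  also have "\<dots> \<le> (\<Sum>x\<in>UNIV. B * \<bar>pmf p x - pmf q x\<bar>)"
    by (intro sum_mono mult_right_mono assms) auto
  finally show ?thesis by (simp add: l1_pmf_def sum_distrib_left)
qed

lemma distK_self [simp]: "distK K m m = 0"
  by (simp add: distK_def l1_pmf_def)

lemma distK_triangle: "distK K m1 m3 \<le> distK K m1 m2 + distK K m2 m3"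
  unfolding distK_def sum.distrib[symmetric] by (intro sum_mono l1_pmf_triangle)

lemma abs_distK_le: "\<bar>distK K m1 m2\<bar> \<le> 2 * K"
proof -
  have "0 \<le> distK K m1 m2" unfolding distK_def by (intro sum_nonneg l1_pmf_nonneg)
  moreover have "distK K m1 m2 \<le> (\<Sum>k<K. 2)" unfolding distK_def by (intro sum_mono l1_pmf_le_2)
  ultimately show ?thesis by simp
qed

lemma map_pmf_Pi_pmf_pair:
  assumes "finite A" "i \<in> A" "j \<in> A" "i \<noteq> j"
  shows "map_pmf (\<lambda>c. (c i, c j)) (Pi_pmf A d Q) = pair_pmf (Q i) (Q j)"
proof -
  have "Pi_pmf {i, j} d Q = map_pmf (\<lambda>f x. if x \<in> {i, j} then f x else d) (Pi_pmf A d Q)"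
    using assms by (intro Pi_pmf_subset) auto
  then have "map_pmf (\<lambda>c. (c i, c j)) (Pi_pmf A d Q) = map_pmf (\<lambda>c. (c i, c j)) (Pi_pmf {i, j} d Q)"
    by (simp add: pmf.map_comp o_def)
  also have "Pi_pmf {i, j} d Q = map_pmf (\<lambda>(y, f). f(i := y)) (pair_pmf (Q i) (Pi_pmf {j} d Q))"
    using assms by (subst Pi_pmf_insert[symmetric]) auto
  also have "map_pmf (\<lambda>c. (c i, c j)) \<dots> =
      map_pmf (\<lambda>(a, b). (id a, (\<lambda>f. f j) b)) (pair_pmf (Q i) (Pi_pmf {j} d Q))"
    using assms by (simp add: pmf.map_comp o_def case_prod_unfold)
  also have "\<dots> = pair_pmf (Q i) (Q j)"
    by (subst map_pair) (simp add: Pi_pmf_component)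
  finally show ?thesis .
qed

lemma expectation_pair_pmf_mult:
  fixes F G :: "'a::finite \<Rightarrow> real"
  shows "measure_pmf.expectation (pair_pmf p q) (\<lambda>(x, y). F x * G y) =
    measure_pmf.expectation p F * measure_pmf.expectation q G"
proof -
  have "measure_pmf.expectation p F * measure_pmf.expectation q G =
      (\<Sum>x\<in>UNIV. \<Sum>y\<in>UNIV. (F x * G y) * pmf (pair_pmf p q) (x, y))"
    by (simp add: expectation_finite_pmf pmf_pair sum_product algebra_simps)
  also have "\<dots> = (\<Sum>z\<in>UNIV \<times> UNIV. (case z of (x, y) \<Rightarrow> F x * G y) * pmf (pair_pmf p q) z)"
    by (subst sum.cartesian_product) (auto intro!: sum.cong)
  finally show ?thesis by (simp add: expectation_finite_pmf)
qed

lemma expectation_Pi_pmf_component: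
  fixes f :: "'b \<Rightarrow> real"
  assumes "finite A" "i \<in> A"
  shows "measure_pmf.expectation (Pi_pmf A d Q) (\<lambda>c. f (c i)) = measure_pmf.expectation (Q i) f"
proof -
  have "map_pmf (\<lambda>c. c i) (Pi_pmf A d Q) = Q i"
    using assms by (simp add: Pi_pmf_component)
  then show ?thesis by (metis integral_map_pmf)
qed

lemma expectation_Pi_pmf_two_components:
  fixes F G :: "'b::finite \<Rightarrow> real"
  assumes "finite A" "i \<in> A" "j \<in> A" "i \<noteq> j"
  shows "measure_pmf.expectation (Pi_pmf A d Q) (\<lambda>c. F (c i) * G (c j)) =
    measure_pmf.expectation (Q i) F * measure_pmf.expectation (Q j) G"
proof -
  have "measure_pmf.expectation (Pi_pmf A d Q) (\<lambda>c. F (c i) * G (c j)) =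
      measure_pmf.expectation (map_pmf (\<lambda>c. (c i, c j)) (Pi_pmf A d Q)) (\<lambda>(x, y). F x * G y)"
    by simp
  also have "\<dots> = measure_pmf.expectation (Q i) F * measure_pmf.expectation (Q j) G"
    unfolding map_pmf_Pi_pmf_pair[OF assms] by (rule expectation_pair_pmf_mult)
  finally show ?thesis .
qed

lemma expectation_centered_indicator:
  fixes p :: "'a::finite pmf"
  shows "measure_pmf.expectation p (\<lambda>x. indicator {z} x - pmf p z) = 0"
proof -
  have "(\<Sum>x\<in>UNIV. (indicator {z} x - pmf p z) * pmf p x) =
      (\<Sum>x\<in>UNIV. indicator {z} x * pmf p x) - pmf p z * (\<Sum>x\<in>UNIV. pmf p x)"
    by (simp add: algebra_simps sum_subtractf sum_distrib_left)
  also have "(\<Sum>x\<in>UNIV. indicator {z} x * pmf p x) = pmf p z"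
    by (simp add: indicator_def)
  finally show ?thesis by (simp add: expectation_finite_pmf sum_pmf_UNIV)
qed

lemma expectation_centered_indicator_sq_le:
  fixes p :: "'a::finite pmf"
  shows "measure_pmf.expectation p (\<lambda>x. (indicator {z} x - pmf p z)\<^sup>2) \<le> pmf p z"
proof -
  let ?q = "pmf p z"
  have "(indicator {z} x - ?q)\<^sup>2 = (1 - 2 * ?q) * indicator {z} x + ?q\<^sup>2" for x :: 'a
    by (cases "x = z") (auto simp: power2_eq_square algebra_simps)
  then have "measure_pmf.expectation p (\<lambda>x. (indicator {z} x - ?q)\<^sup>2) =
      (1 - 2 * ?q) * (\<Sum>x\<in>UNIV. indicator {z} x * pmf p x) + ?q\<^sup>2 * (\<Sum>x\<in>UNIV. pmf p x)"
    unfolding expectation_finite_pmf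
    by (simp only: distrib_right sum.distrib sum_distrib_left mult.assoc)
  also have "\<dots> = ?q - ?q\<^sup>2"
    by (simp add: indicator_def power2_eq_square algebra_simps sum_pmf_UNIV)
  finally show ?thesis by simp
qed

lemma expectation_sum_centered_indicators_sq_le:
  fixes Q :: "'i \<Rightarrow> 'b::finite pmf" and g :: "'i \<Rightarrow> 'b \<Rightarrow> 'z::finite"
  assumes A: "finite A" and J: "J \<subseteq> A"
  shows "measure_pmf.expectation (Pi_pmf A d Q)
      (\<lambda>c. (\<Sum>i\<in>J. indicator {z} (g i (c i)) - pmf (map_pmf (g i) (Q i)) z)\<^sup>2)
    \<le> (\<Sum>i\<in>J. pmf (map_pmf (g i) (Q i)) z)"
proof -
  define p where "p i = map_pmf (g i) (Q i)" for i
  define Z where "Z i c = indicator {z} (g i (c i)) - pmf (p i) z" for i and c :: "'i \<Rightarrow> 'b"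
  define V where "V i = measure_pmf.expectation (p i) (\<lambda>x. (indicator {z} x - pmf (p i) z)\<^sup>2)" for i
  have "finite J" using A J finite_subset by blast
  have "finite (set_pmf (Pi_pmf A d Q))"
    using A by (simp add: set_Pi_pmf finite_PiE_dflt)
  then have integrable: "integrable (measure_pmf (Pi_pmf A d Q)) f" for f :: "_ \<Rightarrow> real"
    by (rule integrable_measure_pmf_finite)
  have covariance: "measure_pmf.expectation (Pi_pmf A d Q) (\<lambda>c. Z i c * Z j c) = (if i = j then V i else 0)"
    if "i \<in> A" "j \<in> A" for i j
  proof (cases "i = j")
    case True
    then show ?thesis
      using expectation_Pi_pmf_component[OF A \<open>i \<in> A\<close>,
          of d Q "\<lambda>b. (indicator {z} (g i b) - pmf (p i) z)\<^sup>2"]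
      by (simp add: Z_def V_def p_def power2_eq_square)
  next
    case False
    then show ?thesis
      using expectation_Pi_pmf_two_components[OF A that False, of d Q
          "\<lambda>b. indicator {z} (g i b) - pmf (p i) z" "\<lambda>b. indicator {z} (g j b) - pmf (p j) z"]
        expectation_centered_indicator[of "p i" z]
      by (simp add: Z_def p_def)
  qed
  have "measure_pmf.expectation (Pi_pmf A d Q) (\<lambda>c. (\<Sum>i\<in>J. Z i c)\<^sup>2) =
      (\<Sum>i\<in>J. \<Sum>j\<in>J. measure_pmf.expectation (Pi_pmf A d Q) (\<lambda>c. Z i c * Z j c))"
    by (simp add: power2_eq_square sum_product Bochner_Integration.integral_sum integrable)
  also have "\<dots> = (\<Sum>i\<in>J. V i)"
    using J \<open>finite J\<close> by (intro sum.cong refl) (simp add: covariance subsetD if_distrib cong: sum.cong)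
  also have "\<dots> \<le> (\<Sum>i\<in>J. pmf (p i) z)"
    unfolding V_def by (intro sum_mono expectation_centered_indicator_sq_le)
  finally show ?thesis by (simp add: Z_def p_def)
qed

lemma expectation_l1_empirical_Pi_pmf_le:
  fixes Q :: "'i \<Rightarrow> 'b::finite pmf" and g :: "'i \<Rightarrow> 'b \<Rightarrow> 'z::finite"
  assumes A: "finite A" and J: "J \<subseteq> A" "J \<noteq> {}"
  shows "measure_pmf.expectation (Pi_pmf A d Q)
      (\<lambda>c. l1_pmf (map_pmf (\<lambda>i. g i (c i)) (pmf_of_set J))
                   (bind_pmf (pmf_of_set J) (\<lambda>i. map_pmf (g i) (Q i))))
    \<le> sqrt (CARD('z) / card J)"
proof -
  define p where "p i = map_pmf (g i) (Q i)" for i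
  define S where "S z c = (\<Sum>i\<in>J. indicator {z} (g i (c i)) - pmf (p i) z)" for z and c :: "'i \<Rightarrow> 'b"
  have "finite J" using A J finite_subset by blast
  then have "card J > 0" using J by (simp add: card_gt_0_iff)
  have l1_eq: "l1_pmf (map_pmf (\<lambda>i. g i (c i)) (pmf_of_set J)) (bind_pmf (pmf_of_set J) p) =
      (\<Sum>z\<in>UNIV. \<bar>S z c\<bar> / card J)" for c
    unfolding l1_pmf_def map_pmf_def pmf_bind_pmf_of_set[OF J(2) \<open>finite J\<close>] S_def
    by (simp add: sum_subtractf diff_divide_distrib[symmetric] indicator_def)
  have abs_S_le: "\<bar>S z c\<bar> \<le> card J" for z c
  proof -
    have "\<bar>S z c\<bar> \<le> (\<Sum>i\<in>J. 1)"
      unfolding S_def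
      by (rule order.trans[OF sum_abs], intro sum_mono) (auto simp: indicator_def pmf_le_1)
    then show ?thesis by simp
  qed
  have "finite (set_pmf (Pi_pmf A d Q))"
    using A by (simp add: set_Pi_pmf finite_PiE_dflt)
  then have "measure_pmf.expectation (Pi_pmf A d Q) (\<lambda>c. \<Sum>z\<in>UNIV. \<bar>S z c\<bar> / card J) =
      (\<Sum>z\<in>UNIV. measure_pmf.expectation (Pi_pmf A d Q) (\<lambda>c. \<bar>S z c\<bar>)) / card J"
    by (simp add: Bochner_Integration.integral_sum integrable_measure_pmf_finite sum_divide_distrib)
  also have "\<dots> \<le> (\<Sum>z\<in>UNIV. sqrt (measure_pmf.expectation (Pi_pmf A d Q) (\<lambda>c. (S z c)\<^sup>2))) / card J"
    by (intro divide_right_mono sum_mono expectation_abs_le_sqrt_second_moment[OF abs_S_le]) auto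
  also have "\<dots> \<le> (\<Sum>z\<in>(UNIV::'z set). sqrt (\<Sum>i\<in>J. pmf (p i) z)) / card J"
    unfolding S_def p_def
    by (intro divide_right_mono sum_mono real_sqrt_le_mono expectation_sum_centered_indicators_sq_le A J)
       simp
  also have "\<dots> \<le> sqrt (CARD('z) * (\<Sum>z\<in>UNIV. \<Sum>i\<in>J. pmf (p i) z)) / card J"
    by (intro divide_right_mono sum_sqrt_le_sqrt_card_mult_sum) (auto intro: sum_nonneg)
  also have "(\<Sum>z\<in>UNIV. \<Sum>i\<in>J. pmf (p i) z) = card J"
    by (subst sum.swap) (simp add: sum_pmf_UNIV)
  also have "sqrt (CARD('z) * real (card J)) / card J = sqrt (CARD('z) / card J)"
    using \<open>card J > 0\<close> by (simp add: real_sqrt_mult real_sqrt_divide field_simps)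
  finally show ?thesis by (simp only: l1_eq[unfolded p_def[abs_def]])
qed

definition joint_MF ::
  "(nat \<Rightarrow> 'x pmf) \<Rightarrow> (nat \<Rightarrow> 'x \<Rightarrow> (nat \<Rightarrow> 'x pmf) \<Rightarrow> 'u pmf) \<Rightarrow> nat \<Rightarrow> ('x \<times> 'u) pmf" where
  "joint_MF mu dr k = bind_pmf (mu k) (\<lambda>x. map_pmf (Pair x) (dr k x mu))"

lemma nu_MF_eq_map_joint_MF: "nu_MF mu dr k = map_pmf snd (joint_MF mu dr k)"
  by (simp add: nu_MF_def joint_MF_def map_bind_pmf pmf.map_comp o_def)

lemma P_MF_eq_bind_joint_MF:
  "P_MF P mu dr k = bind_pmf (joint_MF mu dr k) (\<lambda>(x, u). P k x u mu (nu_MF mu dr))"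
  by (simp add: P_MF_def joint_MF_def bind_assoc_pmf bind_map_pmf o_def)

lemma r_MF_eq_expectation_joint_MF:
  "r_MF r mu dr k = measure_pmf.expectation (joint_MF mu dr k) (\<lambda>(x, u). r k x u mu (nu_MF mu dr))"
proof -
  have "measure_pmf.expectation (joint_MF mu dr k) (\<lambda>(x, u). r k x u mu (nu_MF mu dr)) =
      measure_pmf.expectation (mu k)
        (\<lambda>x. measure_pmf.expectation (dr k x mu) (\<lambda>u. r k x u mu (nu_MF mu dr)))"
    unfolding joint_MF_def by (simp add: expectation_bind_pmf_finite)
  also have "\<dots> = r_MF r mu dr k"
    unfolding r_MF_def expectation_finite_pmf
    by (intro sum.cong refl) (simp add: sum_distrib_left algebra_simps)
  finally show ?thesis ..
qed

lemma abs_r_MF_le: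
  assumes "\<And>x u mu nu. \<bar>r k x u mu nu\<bar> \<le> MR"
  shows "\<bar>r_MF r mu dr k\<bar> \<le> MR"
  unfolding r_MF_eq_expectation_joint_MF
  by (rule abs_expectation_le) (simp add: case_prod_unfold assms)

context
  fixes K :: nat and LQ :: real
    and dr :: "nat \<Rightarrow> 'x::finite \<Rightarrow> (nat \<Rightarrow> 'x pmf) \<Rightarrow> 'u::finite pmf"
  assumes dr_lip: "\<And>k x m1 m2. k < K \<Longrightarrow> l1_pmf (dr k x m1) (dr k x m2) \<le> LQ * distK K m1 m2"
begin

lemma l1_joint_MF_le:
  assumes "k < K"
  shows "l1_pmf (joint_MF m1 dr k) (joint_MF m2 dr k) \<le> l1_pmf (m1 k) (m2 k) + LQ * distK K m1 m2"
proof -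
  let ?F = "\<lambda>m x. map_pmf (Pair x) (dr k x m)"
  have "l1_pmf (joint_MF m1 dr k) (joint_MF m2 dr k) \<le>
      l1_pmf (bind_pmf (m1 k) (?F m1)) (bind_pmf (m2 k) (?F m1)) +
      l1_pmf (bind_pmf (m2 k) (?F m1)) (bind_pmf (m2 k) (?F m2))"
    unfolding joint_MF_def by (rule l1_pmf_triangle)
  also have "l1_pmf (bind_pmf (m1 k) (?F m1)) (bind_pmf (m2 k) (?F m1)) \<le> l1_pmf (m1 k) (m2 k)"
    by (rule l1_pmf_bind_pmf_le)
  also have "l1_pmf (bind_pmf (m2 k) (?F m1)) (bind_pmf (m2 k) (?F m2)) \<le>
      measure_pmf.expectation (m2 k) (\<lambda>x. l1_pmf (?F m1 x) (?F m2 x))"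
    by (rule l1_pmf_bind_pmf_kernels_le)
  also have "\<dots> \<le> LQ * distK K m1 m2"
    by (rule expectation_le_const[OF order.trans[OF l1_pmf_map_pmf_le dr_lip[OF assms]] abs_l1_pmf_le_2])
  finally show ?thesis by simp
qed

lemma distK_nu_MF_le: "distK K (nu_MF m1 dr) (nu_MF m2 dr) \<le> (1 + K * LQ) * distK K m1 m2"
proof -
  have "distK K (nu_MF m1 dr) (nu_MF m2 dr) \<le> (\<Sum>k<K. l1_pmf (m1 k) (m2 k) + LQ * distK K m1 m2)"
    unfolding distK_def[of K "nu_MF m1 dr"] nu_MF_eq_map_joint_MF
    by (intro sum_mono order.trans[OF l1_pmf_map_pmf_le l1_joint_MF_le]) auto
  also have "\<dots> = (1 + K * LQ) * distK K m1 m2"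
    by (simp add: sum.distrib distK_def algebra_simps)
  finally show ?thesis .
qed

lemma distK_P_MF_le:
  fixes LP :: real
  assumes P_lip: "\<And>k x u mu1 nu1 mu2 nu2. k < K \<Longrightarrow>
      l1_pmf (P k x u mu1 nu1) (P k x u mu2 nu2) \<le> LP * (distK K mu1 mu2 + distK K nu1 nu2)"
    and "LP \<ge> 0"
  shows "distK K (P_MF P m1 dr) (P_MF P m2 dr) \<le> ((1 + K * LQ) + K * LP * (2 + K * LQ)) * distK K m1 m2"
proof -
  let ?d = "distK K m1 m2"
  have class_le: "l1_pmf (P_MF P m1 dr k) (P_MF P m2 dr k) \<le>
      l1_pmf (m1 k) (m2 k) + LQ * ?d + LP * (2 + K * LQ) * ?d" if k: "k < K" for k
  proof -
    let ?G = "\<lambda>m (x, u). P k x u m (nu_MF m dr)"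
    have "l1_pmf (P_MF P m1 dr k) (P_MF P m2 dr k) \<le>
        l1_pmf (bind_pmf (joint_MF m1 dr k) (?G m1)) (bind_pmf (joint_MF m2 dr k) (?G m1)) +
        l1_pmf (bind_pmf (joint_MF m2 dr k) (?G m1)) (bind_pmf (joint_MF m2 dr k) (?G m2))"
      unfolding P_MF_eq_bind_joint_MF by (rule l1_pmf_triangle)
    also have "l1_pmf (bind_pmf (joint_MF m1 dr k) (?G m1)) (bind_pmf (joint_MF m2 dr k) (?G m1)) \<le>
        l1_pmf (m1 k) (m2 k) + LQ * ?d"
      by (rule order.trans[OF l1_pmf_bind_pmf_le l1_joint_MF_le[OF k]])
    also have "l1_pmf (bind_pmf (joint_MF m2 dr k) (?G m1)) (bind_pmf (joint_MF m2 dr k) (?G m2)) \<le>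
        measure_pmf.expectation (joint_MF m2 dr k) (\<lambda>z. l1_pmf (?G m1 z) (?G m2 z))"
      by (rule l1_pmf_bind_pmf_kernels_le)
    also have "\<dots> \<le> LP * (2 + K * LQ) * ?d"
    proof (rule expectation_le_const[OF _ abs_l1_pmf_le_2])
      fix z :: "'x \<times> 'u"
      have "l1_pmf (?G m1 z) (?G m2 z) \<le> LP * (?d + distK K (nu_MF m1 dr) (nu_MF m2 dr))"
        using P_lip[OF k] by (simp add: case_prod_unfold)
      also have "\<dots> \<le> LP * (?d + (1 + K * LQ) * ?d)"
        using distK_nu_MF_le \<open>LP \<ge> 0\<close> by (intro mult_left_mono) auto
      finally show "l1_pmf (?G m1 z) (?G m2 z) \<le> LP * (2 + K * LQ) * ?d"
        by (simp add: algebra_simps)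
    qed
    finally show ?thesis by simp
  qed
  have "distK K (P_MF P m1 dr) (P_MF P m2 dr) \<le>
      (\<Sum>k<K. l1_pmf (m1 k) (m2 k) + LQ * ?d + LP * (2 + K * LQ) * ?d)"
    unfolding distK_def[of K "P_MF P m1 dr"] by (intro sum_mono class_le) auto
  also have "\<dots> = ((1 + K * LQ) + K * LP * (2 + K * LQ)) * ?d"
    by (simp add: sum.distrib distK_def algebra_simps)
  finally show ?thesis .
qed

lemma abs_r_MF_diff_le:
  fixes MR LR :: real
  assumes k: "k < K"
    and r_bound: "\<And>x u mu nu. \<bar>r k x u mu nu\<bar> \<le> MR"
    and r_lip: "\<And>x u mu1 nu1 mu2 nu2.
      \<bar>r k x u mu1 nu1 - r k x u mu2 nu2\<bar> \<le> LR * (distK K mu1 mu2 + distK K nu1 nu2)"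
    and "LR \<ge> 0"
  shows "\<bar>r_MF r m1 dr k - r_MF r m2 dr k\<bar> \<le>
    MR * l1_pmf (m1 k) (m2 k) + (MR * LQ + LR * (2 + K * LQ)) * distK K m1 m2"
proof -
  let ?d = "distK K m1 m2"
  let ?h = "\<lambda>m (x, u). r k x u m (nu_MF m dr)"
  have h_bound: "\<bar>?h m z\<bar> \<le> MR" for m z using r_bound by (simp add: case_prod_unfold)
  have "MR \<ge> 0" using r_bound[of undefined undefined undefined undefined] by linarith
  have "measure_pmf.expectation (joint_MF m2 dr k) (?h m1) - measure_pmf.expectation (joint_MF m2 dr k) (?h m2) =
      measure_pmf.expectation (joint_MF m2 dr k) (\<lambda>z. ?h m1 z - ?h m2 z)"
    by (rule Bochner_Integration.integral_diff[symmetric]; rule integrable_measure_pmf_bounded[OF h_bound])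
  then have "\<bar>r_MF r m1 dr k - r_MF r m2 dr k\<bar> \<le>
      \<bar>measure_pmf.expectation (joint_MF m1 dr k) (?h m1) - measure_pmf.expectation (joint_MF m2 dr k) (?h m1)\<bar> +
      \<bar>measure_pmf.expectation (joint_MF m2 dr k) (\<lambda>z. ?h m1 z - ?h m2 z)\<bar>"
    unfolding r_MF_eq_expectation_joint_MF by linarith
  also have "\<bar>measure_pmf.expectation (joint_MF m1 dr k) (?h m1) -
      measure_pmf.expectation (joint_MF m2 dr k) (?h m1)\<bar> \<le> MR * (l1_pmf (m1 k) (m2 k) + LQ * ?d)"
    by (rule order.trans[OF abs_expectation_diff_le_l1_pmf[OF h_bound]])
       (intro mult_left_mono l1_joint_MF_le k \<open>MR \<ge> 0\<close>)
  also have "\<bar>measure_pmf.expectation (joint_MF m2 dr k) (\<lambda>z. ?h m1 z - ?h m2 z)\<bar> \<le> LR * (2 + K * LQ) * ?d"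
  proof (rule abs_expectation_le)
    fix z :: "'x \<times> 'u"
    have "\<bar>?h m1 z - ?h m2 z\<bar> \<le> LR * (?d + distK K (nu_MF m1 dr) (nu_MF m2 dr))"
      using r_lip by (simp add: case_prod_unfold)
    also have "\<dots> \<le> LR * (?d + (1 + K * LQ) * ?d)"
      using distK_nu_MF_le \<open>LR \<ge> 0\<close> by (intro mult_left_mono) auto
    finally show "\<bar>?h m1 z - ?h m2 z\<bar> \<le> LR * (2 + K * LQ) * ?d" by (simp add: algebra_simps)
  qed
  finally show ?thesis by (simp add: algebra_simps)
qed

end

lemma expectation_l1_class_empirical_le:
  fixes Q :: "nat \<times> nat \<Rightarrow> 'b::finite pmf" and g :: "nat \<times> nat \<Rightarrow> 'b \<Rightarrow> 'z::finite"
  assumes A: "finite A" and sub: "Pair k ` {..<n} \<subseteq> A" and "n \<ge> 1"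
  shows "measure_pmf.expectation (Pi_pmf A d Q)
      (\<lambda>c. l1_pmf (map_pmf (\<lambda>j. g (k, j) (c (k, j))) (pmf_of_set {..<n}))
                   (bind_pmf (pmf_of_set {..<n}) (\<lambda>j. map_pmf (g (k, j)) (Q (k, j)))))
    \<le> sqrt (CARD('z) / n)"
proof -
  have inj: "inj_on (Pair k) {..<n}" by (auto simp: inj_on_def)
  have ne: "{..<n} \<noteq> {}" using \<open>n \<ge> 1\<close> by (auto simp: lessThan_empty_iff)
  have reindex: "pmf_of_set (Pair k ` {..<n}) = map_pmf (Pair k) (pmf_of_set {..<n})"
    by (rule map_pmf_of_set_inj[OF inj ne, symmetric]) simp
  have "card (Pair k ` {..<n}) = n" using card_image[OF inj] by simp
  then show ?thesis
    using expectation_l1_empirical_Pi_pmf_le[OF A sub, of d Q g] ne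
    by (simp add: reindex pmf.map_comp bind_map_pmf o_def)
qed

definition emp_joint ::
  "(nat \<Rightarrow> nat) \<Rightarrow> (nat \<times> nat \<Rightarrow> 'x) \<Rightarrow> (nat \<times> nat \<Rightarrow> 'u) \<Rightarrow> nat \<Rightarrow> ('x \<times> 'u) pmf" where
  "emp_joint N s a k = map_pmf (\<lambda>j. (s (k, j), a (k, j))) (pmf_of_set {..<N k})"

lemma emp_eq_map_emp_joint: "emp N a k = map_pmf snd (emp_joint N s a k)"
  by (simp add: emp_def emp_joint_def pmf.map_comp o_def)

lemma joint_MF_emp:
  "joint_MF (emp N s) dr k =
    bind_pmf (pmf_of_set {..<N k}) (\<lambda>j. map_pmf (Pair (s (k, j))) (dr k (s (k, j)) (emp N s)))"
  by (simp add: joint_MF_def emp_def[of N s k] bind_map_pmf o_def)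

lemma finite_agents: "finite (agents K N)"
  by (simp add: agents_def)

lemma class_subset_agents: "k < K \<Longrightarrow> Pair k ` {..<N k} \<subseteq> agents K N"
  by (auto simp: agents_def)

lemma expectation_l1_emp_joint_le:
  fixes s :: "nat \<times> nat \<Rightarrow> 'x::finite"
    and pol :: "nat \<Rightarrow> nat \<Rightarrow> 'x \<Rightarrow> (nat \<Rightarrow> 'x pmf) \<Rightarrow> 'u::finite pmf"
  assumes "k < K" and "N k \<ge> 1"
  shows "measure_pmf.expectation (act_pmf K N pol t s)
      (\<lambda>a. l1_pmf (emp_joint N s a k) (joint_MF (emp N s) (pol t) k))
    \<le> sqrt (CARD('x) * CARD('u) / N k)"
  using expectation_l1_class_empirical_le[OF finite_agents class_subset_agents[of k K N, OF assms(1)] assms(2),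
      of undefined "\<lambda>(k, j). pol t k (s (k, j)) (emp N s)" "\<lambda>i u. (s i, u)"]
  by (simp add: act_pmf_def emp_joint_def joint_MF_emp)

lemma expectation_l1_emp_next_le:
  fixes s :: "nat \<times> nat \<Rightarrow> 'x::finite" and a :: "nat \<times> nat \<Rightarrow> 'u::finite"
  assumes "k < K" and "N k \<ge> 1"
  shows "measure_pmf.expectation (next_pmf K N P s a)
      (\<lambda>s'. l1_pmf (emp N s' k)
        (bind_pmf (pmf_of_set {..<N k}) (\<lambda>j. P k (s (k, j)) (a (k, j)) (emp N s) (emp N a))))
    \<le> sqrt (CARD('x) / N k)"
  using expectation_l1_class_empirical_le[OF finite_agents class_subset_agents[of k K N, OF assms(1)] assms(2),
      of undefined "\<lambda>(k, j). P k (s (k, j)) (a (k, j)) (emp N s) (emp N a)" "\<lambda>i x. x"]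
  by (simp add: next_pmf_def emp_def[of N _ k])

locale mf_system =
  fixes K :: nat and N :: "nat \<Rightarrow> nat"
    and r :: "nat \<Rightarrow> 'x::finite \<Rightarrow> 'u::finite \<Rightarrow> (nat \<Rightarrow> 'x pmf) \<Rightarrow> (nat \<Rightarrow> 'u pmf) \<Rightarrow> real"
    and P :: "nat \<Rightarrow> 'x \<Rightarrow> 'u \<Rightarrow> (nat \<Rightarrow> 'x pmf) \<Rightarrow> (nat \<Rightarrow> 'u pmf) \<Rightarrow> 'x pmf"
    and MR LR LP LQ \<gamma> :: real
    and pol :: "nat \<Rightarrow> nat \<Rightarrow> 'x \<Rightarrow> (nat \<Rightarrow> 'x pmf) \<Rightarrow> 'u pmf"
  assumes K_pos: "K \<ge> 1"
    and N_pos: "\<And>k. k < K \<Longrightarrow> N k \<ge> 1"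
    and MR_pos: "MR > 0" and LR_pos: "LR > 0" and LP_pos: "LP > 0" and LQ_pos: "LQ > 0"
    and gamma_nonneg: "0 \<le> \<gamma>" and gamma_less_1: "\<gamma> < 1"
    and r_bound: "\<And>k x u mu nu. k < K \<Longrightarrow> \<bar>r k x u mu nu\<bar> \<le> MR"
    and r_lip: "\<And>k x u mu1 nu1 mu2 nu2. k < K \<Longrightarrow>
        \<bar>r k x u mu1 nu1 - r k x u mu2 nu2\<bar> \<le> LR * (distK K mu1 mu2 + distK K nu1 nu2)"
    and P_lip: "\<And>k x u mu1 nu1 mu2 nu2. k < K \<Longrightarrow>
        l1_pmf (P k x u mu1 nu1) (P k x u mu2 nu2) \<le> LP * (distK K mu1 mu2 + distK K nu1 nu2)"
    and SP_cond: "\<gamma> * ((1 + K * LQ) + K * LP * (2 + K * LQ)) < 1"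
    and pol_in: "pol \<in> Lip_policies K LQ"
begin

definition conc_err :: real where "conc_err = sqrt (CARD('x) * CARD('u)) * (\<Sum>k<K. 1 / sqrt (N k))"
definition S_P :: real where "S_P = (1 + K * LQ) + K * LP * (2 + K * LQ)"
definition S_R :: real where "S_R = MR * (1 + LQ) + LR * (2 + K * LQ)"

definition act_err :: "nat \<Rightarrow> (nat \<times> nat \<Rightarrow> 'x) \<Rightarrow> (nat \<times> nat \<Rightarrow> 'u) \<Rightarrow> real" where
  "act_err t s a = (\<Sum>k<K. l1_pmf (emp_joint N s a k) (joint_MF (emp N s) (pol t) k))"

definition reward_N :: "(nat \<times> nat \<Rightarrow> 'x) \<Rightarrow> (nat \<times> nat \<Rightarrow> 'u) \<Rightarrow> real" where
  "reward_N s a =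
    (\<Sum>k<K. theta K N k * measure_pmf.expectation (emp_joint N s a k) (\<lambda>(x, u). r k x u (emp N s) (emp N a)))"

definition reward_MF :: "nat \<Rightarrow> (nat \<Rightarrow> 'x pmf) \<Rightarrow> real" where
  "reward_MF t mu = (\<Sum>k<K. theta K N k * r_MF r mu (pol t) k)"

definition expected_reward_N :: "(nat \<times> nat \<Rightarrow> 'x) \<Rightarrow> nat \<Rightarrow> real" where
  "expected_reward_N x0 t =
    measure_pmf.expectation (joint_dist K N P pol x0 t) (\<lambda>(s, a). reward_N s a)"

definition next_mean :: "(nat \<times> nat \<Rightarrow> 'x) \<Rightarrow> (nat \<times> nat \<Rightarrow> 'u) \<Rightarrow> nat \<Rightarrow> 'x pmf" where
  "next_mean s a k =
    bind_pmf (pmf_of_set {..<N k}) (\<lambda>j. P k (s (k, j)) (a (k, j)) (emp N s) (emp N a))"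

definition state_err :: "(nat \<times> nat \<Rightarrow> 'x) \<Rightarrow> (nat \<Rightarrow> 'x pmf) \<Rightarrow> nat \<Rightarrow> real" where
  "state_err x0 mu0 t =
    measure_pmf.expectation (state_dist K N P pol x0 t) (\<lambda>s. distK K (emp N s) (mf_traj P pol mu0 t))"

lemma pol_lip: "k < K \<Longrightarrow> l1_pmf (pol t k x m1) (pol t k x m2) \<le> LQ * distK K m1 m2"
  using pol_in by (auto simp: Lip_policies_def)

lemma Npop_pos: "Npop K N > 0"
proof -
  have "1 \<le> N 0" using N_pos K_pos by auto
  also have "N 0 \<le> Npop K N" unfolding Npop_def using K_pos by (intro member_le_sum) auto
  finally show ?thesis by simp
qed

lemma theta_nonneg: "0 \<le> theta K N k"
  by (simp add: theta_def)

lemma sum_theta: "(\<Sum>k<K. theta K N k) = 1"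
proof -
  have "(\<Sum>k<K. real (N k)) = real (Npop K N)" by (simp add: Npop_def)
  then show ?thesis using Npop_pos by (simp add: theta_def sum_divide_distrib[symmetric])
qed

lemma theta_le_1: "k < K \<Longrightarrow> theta K N k \<le> 1"
  using member_le_sum[of k "{..<K}" "theta K N"] theta_nonneg sum_theta by auto

lemma abs_act_err_le: "\<bar>act_err t s a\<bar> \<le> 2 * K"
proof -
  have "0 \<le> act_err t s a" unfolding act_err_def by (intro sum_nonneg l1_pmf_nonneg)
  moreover have "act_err t s a \<le> (\<Sum>k<K. 2)" unfolding act_err_def by (intro sum_mono l1_pmf_le_2)
  ultimately show ?thesis by simp
qed

lemma expectation_act_err_le: "measure_pmf.expectation (act_pmf K N pol t s) (act_err t s) \<le> conc_err"
proof -
  have "measure_pmf.expectation (act_pmf K N pol t s) (act_err t s) =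
      (\<Sum>k<K. measure_pmf.expectation (act_pmf K N pol t s)
        (\<lambda>a. l1_pmf (emp_joint N s a k) (joint_MF (emp N s) (pol t) k)))"
    unfolding act_err_def
    by (rule Bochner_Integration.integral_sum) (rule integrable_measure_pmf_bounded[OF abs_l1_pmf_le_2])
  also have "\<dots> \<le> (\<Sum>k<K. sqrt (CARD('x) * CARD('u) / N k))"
    by (intro sum_mono expectation_l1_emp_joint_le N_pos) auto
  also have "\<dots> = conc_err"
    unfolding conc_err_def by (simp add: sum_distrib_left real_sqrt_divide)
  finally show ?thesis .
qed

lemma distK_emp_act_le_act_err: "distK K (emp N a) (nu_MF (emp N s) (pol t)) \<le> act_err t s a"
  unfolding distK_def act_err_def
  by (intro sum_mono) (simp add: emp_eq_map_emp_joint[of N a _ s] nu_MF_eq_map_joint_MF l1_pmf_map_pmf_le)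

lemma abs_reward_MF_le: "\<bar>reward_MF t mu\<bar> \<le> MR"
proof -
  have "\<bar>reward_MF t mu\<bar> \<le> (\<Sum>k<K. theta K N k * MR)"
    unfolding reward_MF_def
    by (rule order.trans[OF sum_abs], intro sum_mono)
       (auto simp: abs_mult theta_nonneg intro!: mult_left_mono abs_r_MF_le r_bound)
  then show ?thesis by (simp add: sum_distrib_right[symmetric] sum_theta)
qed

lemma abs_reward_N_le: "\<bar>reward_N s a\<bar> \<le> MR"
proof -
  have "\<bar>reward_N s a\<bar> \<le> (\<Sum>k<K. theta K N k * MR)"
    unfolding reward_N_def
    by (rule order.trans[OF sum_abs], intro sum_mono)
       (auto simp: abs_mult theta_nonneg case_prod_unfold intro!: mult_left_mono abs_expectation_le r_bound)
  then show ?thesis by (simp add: sum_distrib_right[symmetric] sum_theta)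
qed

lemma abs_class_reward_N_diff_le:
  assumes k: "k < K"
  shows "\<bar>measure_pmf.expectation (emp_joint N s a k) (\<lambda>(x, u). r k x u (emp N s) (emp N a)) -
      r_MF r (emp N s) (pol t) k\<bar>
    \<le> LR * act_err t s a + MR * l1_pmf (emp_joint N s a k) (joint_MF (emp N s) (pol t) k)"
proof -
  let ?nu = "nu_MF (emp N s) (pol t)"
  let ?ha = "\<lambda>(x, u). r k x u (emp N s) (emp N a)" and ?hm = "\<lambda>(x, u). r k x u (emp N s) ?nu"
  have ha: "\<bar>?ha z\<bar> \<le> MR" and hm: "\<bar>?hm z\<bar> \<le> MR" for z
    using r_bound[OF k] by (auto simp: case_prod_unfold)
  have "measure_pmf.expectation (emp_joint N s a k) ?ha - measure_pmf.expectation (emp_joint N s a k) ?hm =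
      measure_pmf.expectation (emp_joint N s a k) (\<lambda>z. ?ha z - ?hm z)"
    by (rule Bochner_Integration.integral_diff[symmetric];
        rule integrable_measure_pmf_bounded, rule ha hm)
  also have "\<bar>\<dots>\<bar> \<le> LR * act_err t s a"
  proof (rule abs_expectation_le)
    fix z :: "'x \<times> 'u"
    have "\<bar>?ha z - ?hm z\<bar> \<le> LR * (distK K (emp N s) (emp N s) + distK K (emp N a) ?nu)"
      using r_lip[OF k, of "fst z" "snd z" "emp N s" "emp N a" "emp N s" ?nu]
      by (simp add: case_prod_unfold)
    also have "\<dots> \<le> LR * act_err t s a"
      using distK_emp_act_le_act_err LR_pos by (intro mult_left_mono) auto
    finally show "\<bar>?ha z - ?hm z\<bar> \<le> LR * act_err t s a" .
  qed
  finally have "\<bar>measure_pmf.expectation (emp_joint N s a k) ?ha -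
      measure_pmf.expectation (emp_joint N s a k) ?hm\<bar> \<le> LR * act_err t s a" .
  moreover have "\<bar>measure_pmf.expectation (emp_joint N s a k) ?hm -
      measure_pmf.expectation (joint_MF (emp N s) (pol t) k) ?hm\<bar>
    \<le> MR * l1_pmf (emp_joint N s a k) (joint_MF (emp N s) (pol t) k)"
    by (rule abs_expectation_diff_le_l1_pmf[OF hm])
  ultimately show ?thesis
    unfolding r_MF_eq_expectation_joint_MF by linarith
qed

lemma abs_reward_N_diff_le: "\<bar>reward_N s a - reward_MF t (emp N s)\<bar> \<le> (MR + LR) * act_err t s a"
proof -
  let ?l1 = "\<lambda>k. l1_pmf (emp_joint N s a k) (joint_MF (emp N s) (pol t) k)"
  have "\<bar>reward_N s a - reward_MF t (emp N s)\<bar> \<le>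
      (\<Sum>k<K. theta K N k * (LR * act_err t s a + MR * ?l1 k))"
    unfolding reward_N_def reward_MF_def sum_subtractf[symmetric] right_diff_distrib[symmetric]
    by (rule order.trans[OF sum_abs], intro sum_mono)
       (auto simp: abs_mult theta_nonneg intro!: mult_left_mono abs_class_reward_N_diff_le)
  also have "\<dots> \<le> (\<Sum>k<K. theta K N k * (LR * act_err t s a)) + (\<Sum>k<K. MR * ?l1 k)"
    unfolding distrib_left sum.distrib
    using MR_pos by (intro add_left_mono sum_mono mult_left_le_one_le mult_nonneg_nonneg
        l1_pmf_nonneg theta_nonneg theta_le_1) auto
  also have "\<dots> = (MR + LR) * act_err t s a"
    by (simp add: act_err_def sum_distrib_left[symmetric] sum_distrib_right[symmetric] sum_theta
        algebra_simps)
  finally show ?thesis .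
qed

lemma expectation_abs_reward_N_diff_le:
  "measure_pmf.expectation (act_pmf K N pol t s) (\<lambda>a. \<bar>reward_N s a - reward_MF t (emp N s)\<bar>)
    \<le> (MR + LR) * conc_err"
proof -
  have "measure_pmf.expectation (act_pmf K N pol t s) (\<lambda>a. \<bar>reward_N s a - reward_MF t (emp N s)\<bar>)
      \<le> 0 + (MR + LR) * measure_pmf.expectation (act_pmf K N pol t s) (act_err t s)"
  proof (rule expectation_le_affine[where Bf="2 * MR" and Bg="2 * K", OF _ _ abs_act_err_le])
    fix a
    show "\<bar>reward_N s a - reward_MF t (emp N s)\<bar> \<le> 0 + (MR + LR) * act_err t s a"
      using abs_reward_N_diff_le by simp
    show "\<bar>\<bar>reward_N s a - reward_MF t (emp N s)\<bar>\<bar> \<le> 2 * MR"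
      using abs_reward_N_le[of s a] abs_reward_MF_le[of t "emp N s"] by linarith
  qed
  also have "\<dots> \<le> (MR + LR) * conc_err"
    using MR_pos LR_pos expectation_act_err_le[of t s] by (simp add: mult_left_mono)
  finally show ?thesis .
qed

lemma abs_reward_MF_diff_le: "\<bar>reward_MF t m1 - reward_MF t m2\<bar> \<le> S_R * distK K m1 m2"
proof -
  let ?c = "MR * LQ + LR * (2 + K * LQ)"
  have "\<bar>reward_MF t m1 - reward_MF t m2\<bar> \<le>
      (\<Sum>k<K. theta K N k * (MR * l1_pmf (m1 k) (m2 k) + ?c * distK K m1 m2))"
    unfolding reward_MF_def sum_subtractf[symmetric] right_diff_distrib[symmetric]
    using LR_pos
    by (intro order.trans[OF sum_abs] sum_mono)
       (auto simp: abs_mult theta_nonneg intro!: mult_left_mono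
         abs_r_MF_diff_le[where dr="pol t", OF pol_lip] r_bound r_lip)
  also have "\<dots> \<le> (\<Sum>k<K. MR * l1_pmf (m1 k) (m2 k)) + (\<Sum>k<K. theta K N k * (?c * distK K m1 m2))"
    unfolding distrib_left sum.distrib
    using MR_pos by (intro add_right_mono sum_mono mult_left_le_one_le mult_nonneg_nonneg
        l1_pmf_nonneg theta_nonneg theta_le_1) auto
  also have "(\<Sum>k<K. theta K N k * (?c * distK K m1 m2)) = ?c * distK K m1 m2"
    by (simp add: sum_theta flip: sum_distrib_right)
  also have "(\<Sum>k<K. MR * l1_pmf (m1 k) (m2 k)) = MR * distK K m1 m2"
    by (simp add: distK_def sum_distrib_left)
  finally show ?thesis by (simp add: S_R_def algebra_simps)
qed

lemma S_P_gt_1: "S_P > 1"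
proof -
  have "real K * LQ > 0" using K_pos LQ_pos by auto
  moreover have "real K * LP * (2 + real K * LQ) \<ge> 0" using LP_pos LQ_pos by auto
  ultimately show ?thesis unfolding S_P_def by linarith
qed

lemma distK_next_mean_le:
  "distK K (next_mean s a) (P_MF P (emp N s) (pol t)) \<le> (1 + K * LP) * act_err t s a"
proof -
  let ?l1 = "\<lambda>k. l1_pmf (emp_joint N s a k) (joint_MF (emp N s) (pol t) k)"
  have class_le: "l1_pmf (next_mean s a k) (P_MF P (emp N s) (pol t) k) \<le> LP * act_err t s a + ?l1 k"
    if k: "k < K" for k
  proof -
    let ?nu = "nu_MF (emp N s) (pol t)"
    let ?Ga = "\<lambda>(x, u). P k x u (emp N s) (emp N a)" and ?Gm = "\<lambda>(x, u). P k x u (emp N s) ?nu"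
    have next_mean_eq: "next_mean s a k = bind_pmf (emp_joint N s a k) ?Ga"
      by (simp add: next_mean_def emp_joint_def bind_map_pmf)
    have "l1_pmf (next_mean s a k) (P_MF P (emp N s) (pol t) k) \<le>
        l1_pmf (bind_pmf (emp_joint N s a k) ?Ga) (bind_pmf (emp_joint N s a k) ?Gm) +
        l1_pmf (bind_pmf (emp_joint N s a k) ?Gm) (bind_pmf (joint_MF (emp N s) (pol t) k) ?Gm)"
      unfolding next_mean_eq P_MF_eq_bind_joint_MF by (rule l1_pmf_triangle)
    also have "l1_pmf (bind_pmf (emp_joint N s a k) ?Ga) (bind_pmf (emp_joint N s a k) ?Gm) \<le>
        measure_pmf.expectation (emp_joint N s a k) (\<lambda>z. l1_pmf (?Ga z) (?Gm z))"
      by (rule l1_pmf_bind_pmf_kernels_le)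
    also have "\<dots> \<le> LP * act_err t s a"
    proof (rule expectation_le_const[OF _ abs_l1_pmf_le_2])
      fix z :: "'x \<times> 'u"
      have "l1_pmf (?Ga z) (?Gm z) \<le> LP * (distK K (emp N s) (emp N s) + distK K (emp N a) ?nu)"
        using P_lip[OF k, of "fst z" "snd z" "emp N s" "emp N a" "emp N s" ?nu]
        by (simp add: case_prod_unfold)
      also have "\<dots> \<le> LP * act_err t s a"
        using distK_emp_act_le_act_err LP_pos by (intro mult_left_mono) auto
      finally show "l1_pmf (?Ga z) (?Gm z) \<le> LP * act_err t s a" .
    qed
    also have "l1_pmf (bind_pmf (emp_joint N s a k) ?Gm) (bind_pmf (joint_MF (emp N s) (pol t) k) ?Gm) \<le>
        ?l1 k"
      by (rule l1_pmf_bind_pmf_le)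
    finally show ?thesis by simp
  qed
  have "distK K (next_mean s a) (P_MF P (emp N s) (pol t)) \<le> (\<Sum>k<K. LP * act_err t s a + ?l1 k)"
    unfolding distK_def by (intro sum_mono class_le) auto
  also have "\<dots> = (1 + K * LP) * act_err t s a"
    by (simp add: sum.distrib act_err_def algebra_simps)
  finally show ?thesis .
qed

lemma expectation_distK_emp_next_mean_le:
  "measure_pmf.expectation (next_pmf K N P s a) (\<lambda>s'. distK K (emp N s') (next_mean s a)) \<le> conc_err"
proof -
  have "measure_pmf.expectation (next_pmf K N P s a) (\<lambda>s'. distK K (emp N s') (next_mean s a)) =
      (\<Sum>k<K. measure_pmf.expectation (next_pmf K N P s a) (\<lambda>s'. l1_pmf (emp N s' k) (next_mean s a k)))"
    unfolding distK_def
    by (rule Bochner_Integration.integral_sum) (rule integrable_measure_pmf_bounded[OF abs_l1_pmf_le_2])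
  also have "\<dots> \<le> (\<Sum>k<K. sqrt (CARD('x) / N k))"
    unfolding next_mean_def by (intro sum_mono expectation_l1_emp_next_le N_pos) auto
  also have "\<dots> \<le> (\<Sum>k<K. sqrt (CARD('x) * CARD('u) / N k))"
    by (intro sum_mono real_sqrt_le_mono divide_right_mono) auto
  also have "\<dots> = conc_err"
    unfolding conc_err_def by (simp add: sum_distrib_left real_sqrt_divide)
  finally show ?thesis .
qed

lemma expectation_distK_emp_next_le:
  "measure_pmf.expectation (next_pmf K N P s a) (\<lambda>s'. distK K (emp N s') mu)
    \<le> (1 + K * LP) * act_err t s a + distK K (P_MF P (emp N s) (pol t)) mu + conc_err"
proof -
  have "measure_pmf.expectation (next_pmf K N P s a) (\<lambda>s'. distK K (emp N s') mu)
     \<le> ((1 + K * LP) * act_err t s a + distK K (P_MF P (emp N s) (pol t)) mu) +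
       1 * measure_pmf.expectation (next_pmf K N P s a) (\<lambda>s'. distK K (emp N s') (next_mean s a))"
  proof (rule expectation_le_affine[where Bf="2 * K" and Bg="2 * K", OF _ abs_distK_le abs_distK_le])
    fix s'
    have "distK K (emp N s') mu \<le>
        distK K (emp N s') (next_mean s a) + distK K (next_mean s a) (P_MF P (emp N s) (pol t)) +
        distK K (P_MF P (emp N s) (pol t)) mu"
      using distK_triangle[of K "emp N s'" mu "next_mean s a"]
        distK_triangle[of K "next_mean s a" mu "P_MF P (emp N s) (pol t)"]
      by linarith
    then show "distK K (emp N s') mu \<le> ((1 + K * LP) * act_err t s a +
        distK K (P_MF P (emp N s) (pol t)) mu) + 1 * distK K (emp N s') (next_mean s a)"
      using distK_next_mean_le[of s a t] by simp
  qed
  then show ?thesis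
    using expectation_distK_emp_next_mean_le[of s a] by simp
qed

lemma state_err_Suc_le: "state_err x0 mu0 (Suc t) \<le> (2 + K * LP) * conc_err + S_P * state_err x0 mu0 t"
proof -
  let ?mu = "mf_traj P pol mu0 t"
  let ?next_err = "\<lambda>s a. measure_pmf.expectation (next_pmf K N P s a)
      (\<lambda>s'. distK K (emp N s') (P_MF P ?mu (pol t)))"
  have abs_next_err: "\<bar>?next_err s a\<bar> \<le> 2 * K" for s a
    by (rule abs_expectation_le[OF abs_distK_le])
  have one_step: "measure_pmf.expectation (act_pmf K N pol t s) (?next_err s)
      \<le> (2 + K * LP) * conc_err + S_P * distK K (emp N s) ?mu" for s
  proof -
    have "measure_pmf.expectation (act_pmf K N pol t s) (?next_err s)
      \<le> (distK K (P_MF P (emp N s) (pol t)) (P_MF P ?mu (pol t)) + conc_err) +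
        (1 + K * LP) * measure_pmf.expectation (act_pmf K N pol t s) (act_err t s)"
    proof (rule expectation_le_affine[where Bf="2 * K" and Bg="2 * K", OF _ abs_next_err abs_act_err_le])
      show "?next_err s a \<le> (distK K (P_MF P (emp N s) (pol t)) (P_MF P ?mu (pol t)) + conc_err) +
          (1 + K * LP) * act_err t s a" for a
        using expectation_distK_emp_next_le[of s a "P_MF P ?mu (pol t)" t] by simp
    qed
    moreover have "distK K (P_MF P (emp N s) (pol t)) (P_MF P ?mu (pol t)) \<le> S_P * distK K (emp N s) ?mu"
      unfolding S_P_def by (rule distK_P_MF_le[where dr="pol t", OF pol_lip P_lip]) (use LP_pos in auto)
    moreover have "(1 + K * LP) * measure_pmf.expectation (act_pmf K N pol t s) (act_err t s) \<le>
        (1 + K * LP) * conc_err"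
      using expectation_act_err_le LP_pos by (intro mult_left_mono) auto
    ultimately show ?thesis by (simp add: algebra_simps)
  qed
  have "state_err x0 mu0 (Suc t) = measure_pmf.expectation (state_dist K N P pol x0 t)
      (\<lambda>s. measure_pmf.expectation (act_pmf K N pol t s) (?next_err s))"
    unfolding state_err_def
    by (simp add: expectation_bind_pmf[OF abs_distK_le] expectation_bind_pmf[OF abs_next_err])
  also have "\<dots> \<le> (2 + K * LP) * conc_err + S_P * state_err x0 mu0 t"
    unfolding state_err_def
    by (rule expectation_le_affine[where Bf="2 * K" and Bg="2 * K",
          OF one_step abs_expectation_le[OF abs_next_err] abs_distK_le])
  finally show ?thesis .
qed

lemma state_err_le:
  "state_err x0 (emp N x0) t \<le> (2 + K * LP) * conc_err * (S_P ^ t - 1) / (S_P - 1)"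
proof (induction t)
  case 0
  then show ?case by (simp add: state_err_def)
next
  case (Suc t)
  have "state_err x0 (emp N x0) (Suc t) \<le> (2 + K * LP) * conc_err + S_P * state_err x0 (emp N x0) t"
    by (rule state_err_Suc_le)
  also have "\<dots> \<le> (2 + K * LP) * conc_err + S_P * ((2 + K * LP) * conc_err * (S_P ^ t - 1) / (S_P - 1))"
    using Suc S_P_gt_1 by (intro add_left_mono mult_left_mono) auto
  also have "\<dots> = (2 + K * LP) * conc_err * (S_P ^ Suc t - 1) / (S_P - 1)"
    using S_P_gt_1 by (simp add: field_simps)
  finally show ?case .
qed

lemma abs_expected_reward_N_diff_le:
  "\<bar>expected_reward_N x0 t - reward_MF t (mf_traj P pol mu0 t)\<bar>
    \<le> (MR + LR) * conc_err + S_R * state_err x0 mu0 t"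
proof -
  let ?mu = "mf_traj P pol mu0 t"
  define F where "F s = measure_pmf.expectation (act_pmf K N pol t s) (reward_N s)" for s
  have abs_F: "\<bar>F s\<bar> \<le> MR" for s unfolding F_def by (rule abs_expectation_le[OF abs_reward_N_le])
  have F_gap: "\<bar>F s - reward_MF t ?mu\<bar> \<le> (MR + LR) * conc_err + S_R * distK K (emp N s) ?mu" for s
  proof -
    have "\<bar>F s - reward_MF t (emp N s)\<bar> =
        \<bar>measure_pmf.expectation (act_pmf K N pol t s) (\<lambda>a. reward_N s a - reward_MF t (emp N s))\<bar>"
      unfolding F_def
      by (subst Bochner_Integration.integral_diff[OF integrable_measure_pmf_bounded[OF abs_reward_N_le]])
         auto
    also have "\<dots> \<le> (MR + LR) * conc_err"
      by (rule order.trans[OF integral_abs_bound expectation_abs_reward_N_diff_le])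
    finally show ?thesis
      using abs_reward_MF_diff_le[of t "emp N s" ?mu] by linarith
  qed
  have "expected_reward_N x0 t = measure_pmf.expectation (state_dist K N P pol x0 t) F"
    unfolding expected_reward_N_def joint_dist_def F_def
    by (simp add: expectation_bind_pmf[where B=MR] case_prod_unfold abs_reward_N_le)
  then have "\<bar>expected_reward_N x0 t - reward_MF t ?mu\<bar> =
      \<bar>measure_pmf.expectation (state_dist K N P pol x0 t) (\<lambda>s. F s - reward_MF t ?mu)\<bar>"
    by (subst Bochner_Integration.integral_diff[OF integrable_measure_pmf_bounded[OF abs_F]]) auto
  also have "\<dots> \<le> measure_pmf.expectation (state_dist K N P pol x0 t) (\<lambda>s. \<bar>F s - reward_MF t ?mu\<bar>)"
    by (rule integral_abs_bound)
  also have "\<dots> \<le> (MR + LR) * conc_err + S_R * state_err x0 mu0 t"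
    unfolding state_err_def
  proof (rule expectation_le_affine[where Bf="2 * MR" and Bg="2 * K", OF F_gap _ abs_distK_le])
    show "\<bar>\<bar>F s - reward_MF t ?mu\<bar>\<bar> \<le> 2 * MR" for s
      using abs_F[of s] abs_reward_MF_le[of t ?mu] by linarith
  qed
  finally show ?thesis .
qed

lemma summable_discounted:
  fixes f :: "nat \<Rightarrow> real"
  assumes "\<And>t. \<bar>f t\<bar> \<le> MR"
  shows "summable (\<lambda>t. \<gamma> ^ t * f t)"
proof (rule summable_comparison_test'[where N=0])
  show "summable (\<lambda>t. MR * \<gamma> ^ t)"
    using gamma_nonneg gamma_less_1 by (intro summable_mult summable_geometric) auto
  show "norm (\<gamma> ^ t * f t) \<le> MR * \<gamma> ^ t" for t
    using mult_left_mono[OF assms[of t], of "\<gamma> ^ t"] gamma_nonneg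
    by (simp add: abs_mult mult.commute)
qed

lemma sum_agents_reward:
  "(\<Sum>(k, j)\<in>agents K N. r k (s (k, j)) (a (k, j)) (emp N s) (emp N a)) = real (Npop K N) * reward_N s a"
proof -
  have class_eq: "real (Npop K N) * (theta K N k *
        measure_pmf.expectation (emp_joint N s a k) (\<lambda>(x, u). r k x u (emp N s) (emp N a))) =
      (\<Sum>j<N k. r k (s (k, j)) (a (k, j)) (emp N s) (emp N a))" if "k < K" for k
  proof -
    have "{..<N k} \<noteq> {}" using N_pos[OF that] by (auto simp: lessThan_empty_iff)
    then show ?thesis
      using N_pos[OF that] Npop_pos by (simp add: emp_joint_def integral_pmf_of_set theta_def)
  qed
  have "(\<Sum>(k, j)\<in>agents K N. r k (s (k, j)) (a (k, j)) (emp N s) (emp N a)) =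
      (\<Sum>k<K. \<Sum>j<N k. r k (s (k, j)) (a (k, j)) (emp N s) (emp N a))"
    unfolding agents_def by (subst sum.Sigma) auto
  also have "\<dots> = real (Npop K N) * reward_N s a"
    unfolding reward_N_def sum_distrib_left by (intro sum.cong refl class_eq[symmetric]) simp
  finally show ?thesis .
qed

lemma v_N_sums: "(\<lambda>t. \<gamma> ^ t * expected_reward_N x0 t) sums v_N K N \<gamma> r P x0 pol"
proof -
  define R where "R i s a = r (fst i) (s i) (a i) (emp N s) (emp N a)" for i s a
  define A where "A i t = \<gamma> ^ t * measure_pmf.expectation (joint_dist K N P pol x0 t) (\<lambda>(s, a). R i s a)"
    for i t
  have abs_R: "\<bar>R i s a\<bar> \<le> MR" if "i \<in> agents K N" for i s a
    using that r_bound by (auto simp: R_def agents_def)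
  have "A i sums suminf (A i)" if "i \<in> agents K N" for i
    unfolding A_def
    by (intro summable_sums summable_discounted abs_expectation_le) (simp add: case_prod_unfold abs_R that)
  then have "(\<lambda>t. 1 / real (Npop K N) * (\<Sum>i\<in>agents K N. A i t)) sums
      (1 / real (Npop K N) * (\<Sum>i\<in>agents K N. suminf (A i)))"
    by (intro sums_mult sums_sum)
  moreover have "1 / real (Npop K N) * (\<Sum>i\<in>agents K N. A i t) = \<gamma> ^ t * expected_reward_N x0 t" for t
  proof -
    have "(\<Sum>i\<in>agents K N. A i t) =
        \<gamma> ^ t * measure_pmf.expectation (joint_dist K N P pol x0 t) (\<lambda>(s, a). \<Sum>i\<in>agents K N. R i s a)"
      unfolding A_def sum_distrib_left[symmetric]
      by (subst Bochner_Integration.integral_sum[symmetric])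
         (auto simp: case_prod_unfold intro!: integrable_measure_pmf_bounded[where B=MR] abs_R)
    also have "(\<lambda>(s, a). \<Sum>i\<in>agents K N. R i s a) = (\<lambda>(s, a). real (Npop K N) * reward_N s a)"
      using sum_agents_reward by (simp add: R_def case_prod_unfold)
    finally show ?thesis
      using Npop_pos by (simp add: expected_reward_N_def case_prod_unfold)
  qed
  moreover have "1 / real (Npop K N) * (\<Sum>i\<in>agents K N. suminf (A i)) = v_N K N \<gamma> r P x0 pol"
    by (simp add: v_N_def A_def[abs_def] R_def case_prod_unfold)
  ultimately show ?thesis by simp
qed

lemma v_MF_sums: "(\<lambda>t. \<gamma> ^ t * reward_MF t (mf_traj P pol mu0 t)) sums v_MF K N \<gamma> r P mu0 pol"
proof -
  let ?f = "\<lambda>k t. \<gamma> ^ t * r_MF r (mf_traj P pol mu0 t) (pol t) k"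
  have "?f k sums suminf (?f k)" if "k < K" for k
    using that by (intro summable_sums summable_discounted abs_r_MF_le r_bound)
  then have "(\<lambda>t. \<Sum>k<K. theta K N k * ?f k t) sums (\<Sum>k<K. theta K N k * suminf (?f k))"
    by (intro sums_sum sums_mult) auto
  then show ?thesis
    by (simp add: v_MF_def reward_MF_def sum_distrib_left algebra_simps)
qed

lemma value_gap_le:
  "\<bar>v_N K N \<gamma> r P x0 pol - v_MF K N \<gamma> r P (emp N x0) pol\<bar>
    \<le> (MR + LR) * conc_err / (1 - \<gamma>) +
      (2 + K * LP) * (S_R / (S_P - 1)) * conc_err * (1 / (1 - \<gamma> * S_P) - 1 / (1 - \<gamma>))"
proof -
  let ?mu = "mf_traj P pol (emp N x0)"
  define A where "A = (MR + LR) * conc_err"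
  define B where "B = S_R * ((2 + K * LP) * conc_err)"
  have "S_R \<ge> 0" unfolding S_R_def using MR_pos LR_pos LQ_pos by simp
  have "\<gamma> * S_P < 1" using SP_cond by (simp add: S_P_def)
  have "(\<lambda>t. \<gamma> ^ t * (expected_reward_N x0 t - reward_MF t (?mu t))) sums
      (v_N K N \<gamma> r P x0 pol - v_MF K N \<gamma> r P (emp N x0) pol)"
    unfolding right_diff_distrib by (intro sums_diff v_N_sums v_MF_sums)
  moreover have "(\<lambda>t. \<gamma> ^ t * (A + B * (S_P ^ t - 1) / (S_P - 1))) sums
      (A / (1 - \<gamma>) + B / (S_P - 1) * (1 / (1 - \<gamma> * S_P) - 1 / (1 - \<gamma>)))"
    using gamma_nonneg gamma_less_1 S_P_gt_1 \<open>\<gamma> * S_P < 1\<close> by (rule discounted_geometric_gap_sums)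
  moreover have "\<bar>\<gamma> ^ t * (expected_reward_N x0 t - reward_MF t (?mu t))\<bar> \<le>
      \<gamma> ^ t * (A + B * (S_P ^ t - 1) / (S_P - 1))" for t
  proof -
    have "\<bar>expected_reward_N x0 t - reward_MF t (?mu t)\<bar> \<le> A + S_R * state_err x0 (emp N x0) t"
      unfolding A_def by (rule abs_expected_reward_N_diff_le)
    also have "S_R * state_err x0 (emp N x0) t \<le> S_R * ((2 + K * LP) * conc_err * (S_P ^ t - 1) / (S_P - 1))"
      by (rule mult_left_mono[OF state_err_le \<open>S_R \<ge> 0\<close>])
    also have "\<dots> = B * (S_P ^ t - 1) / (S_P - 1)"
      by (simp add: B_def)
    finally show ?thesis
      using gamma_nonneg by (simp add: abs_mult mult_left_mono)
  qed
  ultimately have "\<bar>v_N K N \<gamma> r P x0 pol - v_MF K N \<gamma> r P (emp N x0) pol\<bar> \<le>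
      A / (1 - \<gamma>) + B / (S_P - 1) * (1 / (1 - \<gamma> * S_P) - 1 / (1 - \<gamma>))"
    by (rule abs_sums_le)
  then show ?thesis
    by (simp add: A_def B_def mult_ac)
qed

end

theorem theorem2:
  fixes K :: nat and N :: "nat \<Rightarrow> nat"
    and r :: "nat \<Rightarrow> 'x::finite \<Rightarrow> 'u::finite \<Rightarrow> (nat \<Rightarrow> 'x pmf) \<Rightarrow> (nat \<Rightarrow> 'u pmf) \<Rightarrow> real"
    and P :: "nat \<Rightarrow> 'x \<Rightarrow> 'u \<Rightarrow> (nat \<Rightarrow> 'x pmf) \<Rightarrow> (nat \<Rightarrow> 'u pmf) \<Rightarrow> 'x pmf"
    and MR LR LP LQ \<gamma> :: real
    and x0 :: "nat \<times> nat \<Rightarrow> 'x"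
    and pol :: "nat \<Rightarrow> nat \<Rightarrow> 'x \<Rightarrow> (nat \<Rightarrow> 'x pmf) \<Rightarrow> 'u pmf"
  assumes K_pos: "K \<ge> 1"
    and N_pos: "\<And>k. k < K \<Longrightarrow> N k \<ge> 1"
    and consts_pos: "MR > 0" "LR > 0" "LP > 0" "LQ > 0"
    and gamma: "0 \<le> \<gamma>" "\<gamma> < 1"
    and r_bound: "\<And>k x u mu nu. k < K \<Longrightarrow> \<bar>r k x u mu nu\<bar> \<le> MR"
    and r_lip: "\<And>k x u mu1 nu1 mu2 nu2. k < K \<Longrightarrow>
        \<bar>r k x u mu1 nu1 - r k x u mu2 nu2\<bar> \<le> LR * (distK K mu1 mu2 + distK K nu1 nu2)"
    and P_lip: "\<And>k x u mu1 nu1 mu2 nu2. k < K \<Longrightarrow>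
        l1_pmf (P k x u mu1 nu1) (P k x u mu2 nu2) \<le> LP * (distK K mu1 mu2 + distK K nu1 nu2)"
    and SP_cond: "\<gamma> * ((1 + K * LQ) + K * LP * (2 + K * LQ)) < 1"
    and pol_in: "pol \<in> Lip_policies K LQ"
  shows
    "let CR = MR + LR; CP = 2 + K * LP;
         SR = MR * (1 + LQ) + LR * (2 + K * LQ);
         SP = (1 + K * LQ) + K * LP * (2 + K * LQ);
         sq = sqrt (real CARD('x) * real CARD('u));
         sN = (\<Sum>k<K. 1 / sqrt (real (N k)))
     in \<bar>v_N K N \<gamma> r P x0 pol - v_MF K N \<gamma> r P (emp N x0) pol\<bar>
        \<le> CR / (1 - \<gamma>) * sq * sN
           + CP * (SR / (SP - 1)) * sq * sN * (1 / (1 - \<gamma> * SP) - 1 / (1 - \<gamma>))"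
proof -
  interpret mf_system K N r P MR LR LP LQ \<gamma> pol
    by (rule mf_system.intro) (fact assms)+
  show ?thesis
    using value_gap_le[of x0] unfolding Let_def conc_err_def S_R_def S_P_def by (simp add: mult.assoc)
qed

end
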